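(* Let $\mathcal R_4=\{(0^m1^na,4^l): m,n,l\ge0,\ a\in\{2,3\},\ (a=2\Rightarrow l=m)\wedge(a=3\Rightarrow l=n)\}\subseteq\{0,1,2,3\}^*\times\{4\}^*$. Then $\mathcal R_4$ can be computed with an isolated cutpoint both by a probabilistic finite state transducer and by a quantum finite state transducer, but neither by a probabilistic nor by a quantum finite state transducer can it be computed with probability $\alpha$ for any $\alpha>1/2$.
   Context: A probabilistic finite state transducer (pfst) is a tuple $T=(Q,\Sigma_1,\Sigma_2,V,f,q_0,Q_{\rm acc},Q_{\rm rej})$ with finite state set $Q$, finite input/output alphabets $\Sigma_1,\Sigma_2$, initial state $q_0$, disjoint accepting/rejecting sets $Q_{\rm acc},Q_{\rm rej}\subseteq Q$ (the other states are non-halting). For each $a\in\Sigma_1\cup\{\ddagger,\$\}$ ($\ddagger,\$$ are end markers) there is a stochastic $Q\times Q$ matrix $V_a$ and an output function $f_a:Q\to\Sigma_2^*$; $V_\$$ puts all probability on halting states. On input $v$ the machine reads $\ddagger v\$$; in state $q$ reading $a$ it appends $f_a(q)$ to the output tape and moves to state $p$ with probability $(V_a)_{qp}$; if $p$ is accepting (rejecting) it halts and accepts with the current output (rejects). $T(w|v)$ is the probability of accepting with output $w$ on input $v$. A quantum finite state transducer (qfst) has the same data except that each $V_a$ is a unitary on $\ell^2(Q)$ (and $V_\$$ maps the span of non-halting states into the span of halting states). Its non-halting part is a vector $\psi=\sum_{q,w}\alpha_{qw}|q\rangle\otimes|w\rangle\in\ell^2(Q\times\Sigma_2^* )$, initially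 $|q_0\rangle\otimes|\epsilon\rangle$; reading $a$ maps it to $\psi'=\sum_{q,w}\alpha_{qw}V_a|q\rangle\otimes|wf_a(q)\rangle$ with $V_a|q\rangle=\sum_p(V_a)_{qp}|p\rangle$, after which the squared norm of the component of $\psi'$ on $\mathrm{span}(Q_{\rm acc})\otimes|x\rangle$ is added to the probability of accepting with output $x$, the squared norm of the component on $\mathrm{span}(Q_{\rm rej})\otimes\ell^2(\Sigma_2^* )$ to the rejection probability, and the computation continues with the projection onto non-halting states. $T(w|v)$ is defined analogously. For $\alpha>1/2$, $T$ computes $\mathcal R$ with probability $\alpha$ if for all $v,w$: $(v,w)\in\mathcal R\Rightarrow T(w|v)\ge\alpha$ and $(v,w)\notin\mathcal R\Rightarrow T(w|v)\le1-\alpha$. $T$ computes $\mathcal R$ with isolated cutpoint if there are $0<\alpha<1$ and $\varepsilon>0$ such that for all $v,w$: $(v,w)\in\mathcal R\Rightarrow T(w|v)\ge\alpha+\varepsilon$ and $(v,w)\notin\mathcal R\Rightarrow T(w|v)\le\alpha-\varepsilon$. *)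

theory Defs
  imports Complex_Main
begin

text \<open>Tape symbols: input letters plus the left end marker (double dagger) and the
right end marker (dollar).\<close>
datatype 'a sym = Sym 'a | LEnd | REnd

text \<open>A finite state transducer with states drawn from nat (a finite set of them),
transition matrices with scalars of type 's (real for pfst, complex for qfst),
entry trans a q p being (V_a)_{qp}, and output functions f_a.\<close>
record 's fst =
  states :: "nat set"
  init   :: nat
  acc    :: "nat set"
  rej    :: "nat set"
  trans  :: "nat sym \<Rightarrow> nat \<Rightarrow> nat \<Rightarrow> 's"
  out    :: "nat sym \<Rightarrow> nat \<Rightarrow> nat list"

definition tape_syms :: "nat set \<Rightarrow> nat sym set" where
  "tape_syms \<Sigma>1 = Sym ` \<Sigma>1 \<union> {LEnd, REnd}"

definition nonhalting :: "('s, 'z) fst_scheme \<Rightarrow> nat set" where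
  "nonhalting T = states T - (acc T \<union> rej T)"

definition fst_basic :: "nat set \<Rightarrow> nat set \<Rightarrow> ('s::zero, 'z) fst_scheme \<Rightarrow> bool" where
  "fst_basic \<Sigma>1 \<Sigma>2 T \<longleftrightarrow> finite (states T) \<and> init T \<in> states T \<and>
     acc T \<subseteq> states T \<and> rej T \<subseteq> states T \<and> acc T \<inter> rej T = {} \<and>
     (\<forall>a\<in>tape_syms \<Sigma>1. \<forall>q\<in>states T.
        set (out T a q) \<subseteq> \<Sigma>2 \<and> (\<forall>p. p \<notin> states T \<longrightarrow> trans T a q p = 0))"

definition is_pfst :: "nat set \<Rightarrow> nat set \<Rightarrow> real fst \<Rightarrow> bool" where
  "is_pfst \<Sigma>1 \<Sigma>2 T \<longleftrightarrow> fst_basic \<Sigma>1 \<Sigma>2 T \<and>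
     (\<forall>a\<in>tape_syms \<Sigma>1. \<forall>q\<in>states T.
        (\<forall>p\<in>states T. trans T a q p \<ge> 0) \<and> (\<Sum>p\<in>states T. trans T a q p) = 1) \<and>
     (\<forall>q\<in>states T. \<forall>p\<in>nonhalting T. trans T REnd q p = 0)"

definition is_qfst :: "nat set \<Rightarrow> nat set \<Rightarrow> complex fst \<Rightarrow> bool" where
  "is_qfst \<Sigma>1 \<Sigma>2 T \<longleftrightarrow> fst_basic \<Sigma>1 \<Sigma>2 T \<and>
     (\<forall>a\<in>tape_syms \<Sigma>1. \<forall>q\<in>states T. \<forall>q'\<in>states T.
        (\<Sum>p\<in>states T. trans T a q p * cnj (trans T a q' p)) = (if q = q' then 1 else 0)) \<and>
     (\<forall>q\<in>nonhalting T. \<forall>p\<in>nonhalting T. trans T REnd q p = 0)"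

text \<open>One step on a configuration vector (state, output) \<Rightarrow> scalar: reading a,
configuration (q,w) contributes its weight times (V_a)_{qp} to (p, w @ f_a(q)).\<close>
definition fst_step :: "('s::comm_ring_1, 'z) fst_scheme \<Rightarrow> nat sym \<Rightarrow>
    (nat \<Rightarrow> nat list \<Rightarrow> 's) \<Rightarrow> (nat \<Rightarrow> nat list \<Rightarrow> 's)" where
  "fst_step T a \<mu> p x =
     (\<Sum>q\<in>states T. if length (out T a q) \<le> length x \<and> drop (length x - length (out T a q)) x = out T a q
        then \<mu> q (take (length x - length (out T a q)) x) * trans T a q p else 0)"

definition restrict_nonhalting :: "('s::zero, 'z) fst_scheme \<Rightarrow>
    (nat \<Rightarrow> nat list \<Rightarrow> 's) \<Rightarrow> (nat \<Rightarrow> nat list \<Rightarrow> 's)" where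
  "restrict_nonhalting T \<mu> p x = (if p \<in> nonhalting T then \<mu> p x else 0)"

text \<open>The function wt
turns an entry into a probability contribution (identity for pfst,
squared modulus for qfst).\<close>
fun fst_run :: "('s \<Rightarrow> real) \<Rightarrow> ('s::comm_ring_1, 'z) fst_scheme \<Rightarrow> nat sym list \<Rightarrow>
    (nat \<Rightarrow> nat list \<Rightarrow> 's) \<Rightarrow> nat list \<Rightarrow> real" where
  "fst_run wt T [] \<mu> x = 0"
| "fst_run wt T (a # as) \<mu> x =
     (\<Sum>p\<in>acc T. wt (fst_step T a \<mu> p x)) +
     fst_run wt T as (restrict_nonhalting T (fst_step T a \<mu>)) x"

definition init_conf :: "('s::{zero,one}, 'z) fst_scheme \<Rightarrow> nat \<Rightarrow> nat list \<Rightarrow> 's" where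
  "init_conf T q x = (if q = init T \<and> x = [] then 1 else 0)"

definition pfst_prob :: "real fst \<Rightarrow> nat list \<Rightarrow> nat list \<Rightarrow> real" where
  "pfst_prob T w v = fst_run (\<lambda>r. r) T (LEnd # map Sym v @ [REnd]) (init_conf T) w"

definition qfst_prob :: "complex fst \<Rightarrow> nat list \<Rightarrow> nat list \<Rightarrow> real" where
  "qfst_prob T w v = fst_run (\<lambda>c. (cmod c)\<^sup>2) T (LEnd # map Sym v @ [REnd]) (init_conf T) w"

definition computes_with_prob ::
  "nat set \<Rightarrow> nat set \<Rightarrow> (nat list \<Rightarrow> nat list \<Rightarrow> real) \<Rightarrow> real \<Rightarrow> (nat list \<times> nat list) set \<Rightarrow> bool" where
  "computes_with_prob \<Sigma>1 \<Sigma>2 P \<alpha> R \<longleftrightarrow> \<alpha> > 1/2 \<and>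
     (\<forall>v\<in>lists \<Sigma>1. \<forall>w\<in>lists \<Sigma>2.
        ((v, w) \<in> R \<longrightarrow> P w v \<ge> \<alpha>) \<and> ((v, w) \<notin> R \<longrightarrow> P w v \<le> 1 - \<alpha>))"

definition computes_isolated ::
  "nat set \<Rightarrow> nat set \<Rightarrow> (nat list \<Rightarrow> nat list \<Rightarrow> real) \<Rightarrow> (nat list \<times> nat list) set \<Rightarrow> bool" where
  "computes_isolated \<Sigma>1 \<Sigma>2 P R \<longleftrightarrow> (\<exists>\<alpha> \<epsilon>. 0 < \<alpha> \<and> \<alpha> < 1 \<and> \<epsilon> > 0 \<and>
     (\<forall>v\<in>lists \<Sigma>1. \<forall>w\<in>lists \<Sigma>2.
        ((v, w) \<in> R \<longrightarrow> P w v \<ge> \<alpha> + \<epsilon>) \<and> ((v, w) \<notin> R \<longrightarrow> P w v \<le> \<alpha> - \<epsilon>)))"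

definition R4 :: "(nat list \<times> nat list) set" where
  "R4 = {(replicate m 0 @ replicate n 1 @ [a], replicate l 4) | m n l a.
           a \<in> {2, 3} \<and> (a = 2 \<longrightarrow> l = m) \<and> (a = 3 \<longrightarrow> l = n)}"

end

theory Submission
  imports Defs
begin

text \<open>Both impossibility results rest on two facts about any pfst or qfst.  Outputs only grow, by at
  most \<open>K\<close> letters per input symbol; and one step neither creates weight (probability, resp.
  squared norm) nor lets configurations with different outputs interfere.  After reading
  \<open>\<ddagger>1\<^sup>N\<close> with \<open>N > 2K\<close>, acceptance of \<open>(1\<^sup>N 2, \<epsilon>)\<close> can only come from the configurations with
  empty output, and acceptance of \<open>(1\<^sup>N 3, 4\<^sup>N)\<close> only from those with non-empty output, so
  the two probabilities add up to at most \<open>1\<close> and cannot both be at least \<open>\<alpha> > 1/2\<close>.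

  For the positive results, a transducer guesses at the start which of the two counts it
  will output, and each branch checks the shape \<open>0\<^sup>*1\<^sup>*a\<close> only probabilistically: switching
  from \<open>0\<close>s to \<open>1\<close>s costs a factor \<open>q\<close>, switching back a factor \<open>p\<close>.  Correct pairs are
  accepted with probability at least \<open>min(c\<^sub>A, c\<^sub>B) q\<close>, wrong ones with at most
  \<open>(c\<^sub>A + c\<^sub>B) q p\<close>, which gives an isolated cutpoint when \<open>p\<close> is small enough: \<open>p = 0\<close> for
  the pfst, and \<open>p = q = 5/13\<close> for the qfst, where unitarity forbids rejecting for sure.\<close>

section \<open>Locality and conservation of weight\<close>

lemma fst_basicD:
  assumes "fst_basic \<Sigma>1 \<Sigma>2 T"
  shows "finite (states T)" "init T \<in> states T" "acc T \<subseteq> states T"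
    "nonhalting T \<subseteq> states T" "acc T \<inter> nonhalting T = {}"
    "\<And>a q. a \<in> tape_syms \<Sigma>1 \<Longrightarrow> q \<in> states T \<Longrightarrow> set (out T a q) \<subseteq> \<Sigma>2"
    "\<And>a q p. a \<in> tape_syms \<Sigma>1 \<Longrightarrow> q \<in> states T \<Longrightarrow> trans T a q p \<noteq> 0 \<Longrightarrow> p \<in> states T"
  using assms unfolding fst_basic_def nonhalting_def by auto

lemma sum_acc_plus_nonhalting_le:
  fixes S :: "nat \<Rightarrow> real"
  assumes basic: "fst_basic \<Sigma>1 \<Sigma>2 T" and nonneg: "\<And>p. S p \<ge> 0"
  shows "(\<Sum>p\<in>acc T. S p) + (\<Sum>p\<in>nonhalting T. S p) \<le> (\<Sum>p\<in>states T. S p)"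
proof -
  have "(\<Sum>p\<in>acc T. S p) + (\<Sum>p\<in>nonhalting T. S p) = (\<Sum>p\<in>acc T \<union> nonhalting T. S p)"
    using fst_basicD(1,3,4,5)[OF basic] by (simp add: sum.union_disjoint finite_subset)
  also have "\<dots> \<le> (\<Sum>p\<in>states T. S p)"
    using fst_basicD(1,3,4)[OF basic] nonneg by (intro sum_mono2) auto
  finally show ?thesis .
qed

definition emit :: "('s::zero, 'z) fst_scheme \<Rightarrow> nat sym \<Rightarrow> (nat \<Rightarrow> nat list \<Rightarrow> 's) \<Rightarrow>
    nat \<Rightarrow> nat list \<Rightarrow> 's" where
  "emit T a \<mu> q x =
     (if length (out T a q) \<le> length x \<and> drop (length x - length (out T a q)) x = out T a q
      then \<mu> q (take (length x - length (out T a q)) x) else 0)"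

lemma emit_append [simp]: "emit T a \<mu> q (y @ out T a q) = \<mu> q y"
  by (simp add: emit_def)

lemma emit_cases:
  obtains (emits) y where "x = y @ out T a q" "\<And>\<mu>. emit T a \<mu> q x = \<mu> q y"
  | (silent) "\<And>\<mu>. emit T a \<mu> q x = 0"
proof (cases "\<exists>y. x = y @ out T a q")
  case True
  then show ?thesis using emits by auto
next
  case False
  then have "emit T a \<mu> q x = 0" for \<mu>
    unfolding emit_def by (metis append_take_drop_id)
  then show ?thesis using silent by blast
qed

lemma fst_step_emit: "fst_step T a \<mu> p x = (\<Sum>q\<in>states T. emit T a \<mu> q x * trans T a q p)"
  unfolding fst_step_def emit_def by (rule sum.cong) auto

fun conf_after :: "('s::comm_ring_1, 'z) fst_scheme \<Rightarrow> nat sym list \<Rightarrow>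
    (nat \<Rightarrow> nat list \<Rightarrow> 's) \<Rightarrow> (nat \<Rightarrow> nat list \<Rightarrow> 's)" where
  "conf_after T [] \<mu> = \<mu>"
| "conf_after T (a # as) \<mu> = conf_after T as (restrict_nonhalting T (fst_step T a \<mu>))"

lemma fst_run_append:
  "fst_run wt T (L @ L') \<mu> x = fst_run wt T L \<mu> x + fst_run wt T L' (conf_after T L \<mu>) x"
  by (induction L arbitrary: \<mu>) auto

lemma restrict_nonhalting_eq:
  "restrict_nonhalting T \<mu> = (\<lambda>q y. if q \<in> nonhalting T then \<mu> q y else 0)"
  unfolding restrict_nonhalting_def by (intro ext) simp

lemma fst_step_cong:
  assumes "\<And>q y. q \<in> states T \<Longrightarrow> x = y @ out T a q \<Longrightarrow> \<mu> q y = \<mu>' q y"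
  shows "fst_step T a \<mu> p x = fst_step T a \<mu>' p x"
  unfolding fst_step_emit
proof (rule sum.cong[OF refl])
  fix q assume "q \<in> states T"
  then show "emit T a \<mu> q x * trans T a q p = emit T a \<mu>' q x * trans T a q p"
    using assms by (cases rule: emit_cases[of x T a q]) simp_all
qed

lemma fst_run_cong:
  assumes "\<And>a q. a \<in> set L \<Longrightarrow> q \<in> states T \<Longrightarrow> length (out T a q) \<le> K"
    and "\<And>q y z. x = y @ z \<Longrightarrow> length z \<le> K * length L \<Longrightarrow> \<mu> q y = \<mu>' q y"
  shows "fst_run wt T L \<mu> x = fst_run wt T L \<mu>' x"
  using assms
proof (induction L arbitrary: \<mu> \<mu>')
  case Nil
  then show ?case by simp
next
  case (Cons a L)
  have step: "fst_step T a \<mu> p y = fst_step T a \<mu>' p y"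
    if "x = y @ z" "length z \<le> K * length L" for p y z
  proof (rule fst_step_cong)
    fix q y' assume "q \<in> states T" "y = y' @ out T a q"
    moreover have "length (out T a q) \<le> K" using Cons.prems(1) \<open>q \<in> states T\<close> by simp
    ultimately show "\<mu> q y' = \<mu>' q y'"
      using that by (intro Cons.prems(2)[of y' "out T a q @ z"]) auto
  qed
  have "fst_run wt T L (restrict_nonhalting T (fst_step T a \<mu>)) x =
        fst_run wt T L (restrict_nonhalting T (fst_step T a \<mu>')) x"
    by (rule Cons.IH) (use Cons.prems step in \<open>auto simp: restrict_nonhalting_def\<close>)
  moreover have "fst_step T a \<mu> p x = fst_step T a \<mu>' p x" for p
    using step[of x "[]"] by simp
  ultimately show ?case by simp
qed

definition outputs_upto :: "nat set \<Rightarrow> nat \<Rightarrow> nat list set" where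
  "outputs_upto S n = {y. set y \<subseteq> S \<and> length y \<le> n}"

lemma finite_outputs_upto: "finite S \<Longrightarrow> finite (outputs_upto S n)"
  unfolding outputs_upto_def by (rule finite_lists_length_le)

definition mass :: "('s \<Rightarrow> real) \<Rightarrow> ('s, 'z) fst_scheme \<Rightarrow> nat list set \<Rightarrow>
    (nat \<Rightarrow> nat list \<Rightarrow> 's) \<Rightarrow> real" where
  "mass wt T Y \<mu> = (\<Sum>q\<in>states T. \<Sum>y\<in>Y. wt (\<mu> q y))"

definition supported_on :: "('s::zero, 'z) fst_scheme \<Rightarrow> nat list set \<Rightarrow>
    (nat \<Rightarrow> nat list \<Rightarrow> 's) \<Rightarrow> bool" where
  "supported_on T Y \<mu> \<longleftrightarrow> (\<forall>q y. \<mu> q y \<noteq> 0 \<longrightarrow> q \<in> states T \<and> y \<in> Y)"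

lemma supported_on_restrict:
  "supported_on T Y \<mu> \<Longrightarrow> supported_on T Y (\<lambda>q y. if P q y then \<mu> q y else 0)"
  unfolding supported_on_def by auto

lemma supported_on_fst_step:
  assumes basic: "fst_basic \<Sigma>1 \<Sigma>2 T" and a: "a \<in> tape_syms \<Sigma>1"
    and K: "\<And>q. q \<in> states T \<Longrightarrow> length (out T a q) \<le> K"
    and supp: "supported_on T (outputs_upto \<Sigma>2 n) \<mu>"
  shows "supported_on T (outputs_upto \<Sigma>2 (n + K)) (fst_step T a \<mu>)"
  unfolding supported_on_def
proof (intro allI impI)
  fix p x assume "fst_step T a \<mu> p x \<noteq> 0"
  then obtain q where q: "q \<in> states T" and nz: "emit T a \<mu> q x * trans T a q p \<noteq> 0"
    unfolding fst_step_emit by (meson sum.neutral)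
  then obtain y where x: "x = y @ out T a q" and "\<mu> q y \<noteq> 0"
    by (cases rule: emit_cases[of x T a q]) (metis mult_zero_left)+
  then have "y \<in> outputs_upto \<Sigma>2 n" using supp unfolding supported_on_def by blast
  then have "x \<in> outputs_upto \<Sigma>2 (n + K)"
    using x fst_basicD(6)[OF basic a q] K[OF q] by (auto simp: outputs_upto_def)
  moreover have "p \<in> states T" using fst_basicD(7)[OF basic a q] nz by (metis mult_zero_right)
  ultimately show "p \<in> states T \<and> x \<in> outputs_upto \<Sigma>2 (n + K)" by simp
qed

lemma mass_fst_step:
  assumes basic: "fst_basic \<Sigma>1 \<Sigma>2 T" and a: "a \<in> tape_syms \<Sigma>1" and fin: "finite \<Sigma>2"
    and K: "\<And>q. q \<in> states T \<Longrightarrow> length (out T a q) \<le> K"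
    and supp: "supported_on T (outputs_upto \<Sigma>2 n) \<mu>" and wt_0: "wt 0 = 0"
    and conserve: "\<And>x. (\<Sum>p\<in>states T. wt (fst_step T a \<mu> p x)) = (\<Sum>q\<in>states T. wt (emit T a \<mu> q x))"
  shows "mass wt T (outputs_upto \<Sigma>2 (n + K)) (fst_step T a \<mu>) = mass wt T (outputs_upto \<Sigma>2 n) \<mu>"
proof -
  let ?Y = "outputs_upto \<Sigma>2 n" and ?Y' = "outputs_upto \<Sigma>2 (n + K)"
  have emitted: "(\<Sum>x\<in>?Y'. wt (emit T a \<mu> q x)) = (\<Sum>y\<in>?Y. wt (\<mu> q y))" if q: "q \<in> states T" for q
  proof -
    let ?app = "\<lambda>y. y @ out T a q"
    have sub: "?app ` ?Y \<subseteq> ?Y'"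
      using fst_basicD(6)[OF basic a q] K[OF q] by (auto simp: outputs_upto_def)
    have "(\<Sum>x\<in>?Y'. wt (emit T a \<mu> q x)) = (\<Sum>x\<in>?app ` ?Y. wt (emit T a \<mu> q x))"
    proof (rule sum.mono_neutral_right[OF finite_outputs_upto[OF fin] sub], rule ballI)
      fix x assume x: "x \<in> ?Y' - ?app ` ?Y"
      show "wt (emit T a \<mu> q x) = 0"
      proof (cases rule: emit_cases[of x T a q])
        case (emits y)
        then have "\<mu> q y = 0" using x supp unfolding supported_on_def by blast
        then show ?thesis using emits wt_0 by simp
      qed (simp add: wt_0)
    qed
    also have "\<dots> = (\<Sum>y\<in>?Y. wt (\<mu> q y))"
      by (subst sum.reindex) (auto simp: inj_on_def)
    finally show ?thesis .
  qed
  have "mass wt T ?Y' (fst_step T a \<mu>) = (\<Sum>x\<in>?Y'. \<Sum>p\<in>states T. wt (fst_step T a \<mu> p x))"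
    unfolding mass_def by (rule sum.swap)
  also have "\<dots> = (\<Sum>q\<in>states T. \<Sum>x\<in>?Y'. wt (emit T a \<mu> q x))"
    unfolding conserve by (rule sum.swap)
  also have "\<dots> = mass wt T ?Y \<mu>"
    unfolding mass_def using emitted by (rule sum.cong[OF refl])
  finally show ?thesis .
qed

text \<open>\<open>wt\<close> turns amplitudes into weights; \<open>G\<close> is an invariant of the configurations that makes
  weights nonnegative and conserved: nonnegative entries for a pfst, no condition for a qfst.\<close>

locale conservative_fst =
  fixes \<Sigma>1 \<Sigma>2 :: "nat set" and T :: "('s::comm_ring_1, 'z) fst_scheme" and K :: nat
    and wt :: "'s \<Rightarrow> real" and G :: "(nat \<Rightarrow> nat list \<Rightarrow> 's) \<Rightarrow> bool"
  assumes basic: "fst_basic \<Sigma>1 \<Sigma>2 T" and finite_out_alphabet: "finite \<Sigma>2"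
    and out_bounded: "\<And>a q. a \<in> tape_syms \<Sigma>1 \<Longrightarrow> q \<in> states T \<Longrightarrow> length (out T a q) \<le> K"
    and wt_0: "wt 0 = 0" and wt_1: "wt 1 = 1"
    and wt_nonneg: "\<And>\<mu> q y. G \<mu> \<Longrightarrow> wt (\<mu> q y) \<ge> 0"
    and G_init: "G (init_conf T)"
    and G_step: "\<And>a \<mu>. a \<in> tape_syms \<Sigma>1 \<Longrightarrow> G \<mu> \<Longrightarrow> G (fst_step T a \<mu>)"
    and G_restrict: "\<And>\<mu> P. G \<mu> \<Longrightarrow> G (\<lambda>q y. if P q y then \<mu> q y else 0)"
    and step_conserves: "\<And>a \<mu> x. a \<in> tape_syms \<Sigma>1 \<Longrightarrow> G \<mu> \<Longrightarrow>
      (\<Sum>p\<in>states T. wt (fst_step T a \<mu> p x)) = (\<Sum>q\<in>states T. wt (emit T a \<mu> q x))"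
begin

lemma mass_nonneg: "G \<mu> \<Longrightarrow> mass wt T Y \<mu> \<ge> 0"
  unfolding mass_def using wt_nonneg by (simp add: sum_nonneg)

lemma mass_init_conf: "mass wt T (outputs_upto \<Sigma>2 0) (init_conf T) = 1"
proof -
  have "outputs_upto \<Sigma>2 0 = {[]}" unfolding outputs_upto_def by auto
  then have "mass wt T (outputs_upto \<Sigma>2 0) (init_conf T) =
      (\<Sum>q\<in>states T. if q = init T then 1 else 0)"
    unfolding mass_def init_conf_def by (intro sum.cong) (auto simp: wt_0 wt_1)
  then show ?thesis using fst_basicD(1,2)[OF basic] by simp
qed

lemma supported_on_init_conf: "supported_on T (outputs_upto \<Sigma>2 0) (init_conf T)"
  using fst_basicD(2)[OF basic] unfolding supported_on_def init_conf_def outputs_upto_def by auto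

lemma conf_after_invariant:
  assumes "set L \<subseteq> tape_syms \<Sigma>1" "G \<mu>" "supported_on T (outputs_upto \<Sigma>2 n) \<mu>"
  shows "G (conf_after T L \<mu>) \<and> supported_on T (outputs_upto \<Sigma>2 (n + K * length L)) (conf_after T L \<mu>)"
  using assms
proof (induction L arbitrary: \<mu> n)
  case Nil
  then show ?case by simp
next
  case (Cons a L)
  have a: "a \<in> tape_syms \<Sigma>1" using Cons.prems by simp
  have "G (restrict_nonhalting T (fst_step T a \<mu>))"
    unfolding restrict_nonhalting_eq by (rule G_restrict[OF G_step[OF a Cons.prems(2)]])
  moreover have "supported_on T (outputs_upto \<Sigma>2 (n + K)) (restrict_nonhalting T (fst_step T a \<mu>))"
    unfolding restrict_nonhalting_eq
    by (intro supported_on_restrict supported_on_fst_step[OF basic a] out_bounded[OF a] Cons.prems(3))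
  ultimately show ?case using Cons.IH[of _ "n + K"] Cons.prems(1) by (simp add: add.assoc)
qed

lemma sum_wt_le_supported:
  assumes "G \<mu>" "supported_on T Y \<mu>" "finite Y" "finite X"
  shows "(\<Sum>x\<in>X. wt (\<mu> p x)) \<le> (\<Sum>y\<in>Y. wt (\<mu> p y))"
proof -
  have "\<mu> p x = 0" if "x \<notin> Y" for x
    using assms(2) that unfolding supported_on_def by blast
  then have "(\<Sum>x\<in>X. wt (\<mu> p x)) = (\<Sum>x\<in>X \<inter> Y. wt (\<mu> p x))"
    using assms(4) by (intro sum.mono_neutral_right) (auto simp: wt_0)
  also have "\<dots> \<le> (\<Sum>y\<in>Y. wt (\<mu> p y))"
    using assms(1,3) wt_nonneg by (intro sum_mono2) auto
  finally show ?thesis .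
qed

lemma accepted_plus_mass_step_le:
  assumes a: "a \<in> tape_syms \<Sigma>1" and "G \<mu>" and supp: "supported_on T (outputs_upto \<Sigma>2 n) \<mu>"
    and "finite X"
  shows "(\<Sum>x\<in>X. \<Sum>p\<in>acc T. wt (fst_step T a \<mu> p x)) +
      mass wt T (outputs_upto \<Sigma>2 (n + K)) (restrict_nonhalting T (fst_step T a \<mu>))
    \<le> mass wt T (outputs_upto \<Sigma>2 n) \<mu>"
proof -
  let ?\<mu> = "fst_step T a \<mu>" and ?Y = "outputs_upto \<Sigma>2 (n + K)"
  define S where "S p = (\<Sum>y\<in>?Y. wt (?\<mu> p y))" for p
  have G: "G ?\<mu>" using G_step[OF a \<open>G \<mu>\<close>] .
  have supp': "supported_on T ?Y ?\<mu>"
    by (rule supported_on_fst_step[OF basic a out_bounded[OF a] supp])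
  have fin: "finite (states T)" "finite ?Y"
    using fst_basicD(1)[OF basic] finite_outputs_upto[OF finite_out_alphabet] by auto
  have S_nonneg: "S p \<ge> 0" for p unfolding S_def using wt_nonneg[OF G] by (simp add: sum_nonneg)
  have "(\<Sum>x\<in>X. wt (?\<mu> p x)) \<le> S p" for p
    unfolding S_def using sum_wt_le_supported[OF G supp' fin(2) \<open>finite X\<close>] .
  then have "(\<Sum>x\<in>X. \<Sum>p\<in>acc T. wt (?\<mu> p x)) \<le> (\<Sum>p\<in>acc T. S p)"
    by (subst sum.swap) (rule sum_mono)
  moreover have "mass wt T ?Y (restrict_nonhalting T ?\<mu>) = (\<Sum>p\<in>nonhalting T. S p)"
  proof -
    have "mass wt T ?Y (restrict_nonhalting T ?\<mu>) =
        (\<Sum>p\<in>states T. if p \<in> nonhalting T then S p else 0)"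
      unfolding mass_def S_def restrict_nonhalting_eq by (intro sum.cong) (auto simp: wt_0)
    then show ?thesis
      using fin(1) fst_basicD(4)[OF basic] by (simp add: sum.If_cases Int_absorb1)
  qed
  moreover have "(\<Sum>p\<in>acc T. S p) + (\<Sum>p\<in>nonhalting T. S p) \<le> (\<Sum>p\<in>states T. S p)"
    using sum_acc_plus_nonhalting_le[OF basic] S_nonneg .
  moreover have "(\<Sum>p\<in>states T. S p) = mass wt T (outputs_upto \<Sigma>2 n) \<mu>"
    using mass_fst_step[OF basic a finite_out_alphabet out_bounded[OF a] supp wt_0
        step_conserves[OF a \<open>G \<mu>\<close>]]
    unfolding mass_def S_def .
  ultimately show ?thesis by linarith
qed

lemma accepted_plus_mass_le:
  assumes "set L \<subseteq> tape_syms \<Sigma>1" "G \<mu>" "supported_on T (outputs_upto \<Sigma>2 n) \<mu>" "finite X"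
  shows "(\<Sum>x\<in>X. fst_run wt T L \<mu> x) +
      mass wt T (outputs_upto \<Sigma>2 (n + K * length L)) (conf_after T L \<mu>)
    \<le> mass wt T (outputs_upto \<Sigma>2 n) \<mu>"
  using assms
proof (induction L arbitrary: \<mu> n)
  case Nil
  then show ?case by simp
next
  case (Cons a L)
  let ?\<mu> = "restrict_nonhalting T (fst_step T a \<mu>)"
  have a: "a \<in> tape_syms \<Sigma>1" using Cons.prems(1) by simp
  have inv: "G ?\<mu> \<and> supported_on T (outputs_upto \<Sigma>2 (n + K)) ?\<mu>"
    using conf_after_invariant[OF _ Cons.prems(2,3), of "[a]"] a by simp
  have "(\<Sum>x\<in>X. fst_run wt T L ?\<mu> x) +
      mass wt T (outputs_upto \<Sigma>2 (n + K + K * length L)) (conf_after T L ?\<mu>)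
    \<le> mass wt T (outputs_upto \<Sigma>2 (n + K)) ?\<mu>"
    using Cons.IH Cons.prems(1,4) inv by simp
  moreover note accepted_plus_mass_step_le[OF a Cons.prems(2,3,4)]
  ultimately show ?case by (simp add: sum.distrib add.assoc)
qed

lemma fst_run_le_mass:
  assumes "set L \<subseteq> tape_syms \<Sigma>1" "G \<mu>" "supported_on T (outputs_upto \<Sigma>2 n) \<mu>"
  shows "fst_run wt T L \<mu> x \<le> mass wt T (outputs_upto \<Sigma>2 n) \<mu>"
  using accepted_plus_mass_le[OF assms, of "{x}"]
    mass_nonneg[OF conjunct1[OF conf_after_invariant[OF assms]], of "outputs_upto \<Sigma>2 (n + K * length L)"]
  by simp

lemma fst_run_empty_plus_long_le_1:
  assumes L: "set L \<subseteq> tape_syms \<Sigma>1" and L1: "set L1 \<subseteq> tape_syms \<Sigma>1"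
    and L2: "set L2 \<subseteq> tape_syms \<Sigma>1" and long: "K * length L2 < length x"
  shows "fst_run wt T (L @ L1) (init_conf T) [] + fst_run wt T (L @ L2) (init_conf T) x \<le> 1"
proof -
  define n where "n = K * length L"
  define \<mu> where "\<mu> = conf_after T L (init_conf T)"
  define \<mu>1 where "\<mu>1 = (\<lambda>q y. if y = [] then \<mu> q y else 0)"
  define \<mu>2 where "\<mu>2 = (\<lambda>q y. if y \<noteq> [] then \<mu> q y else 0)"
  have inv: "G \<mu> \<and> supported_on T (outputs_upto \<Sigma>2 n) \<mu>"
    using conf_after_invariant[OF L G_init supported_on_init_conf] unfolding \<mu>_def n_def by simp
  then have inv12: "G \<mu>1" "G \<mu>2" "supported_on T (outputs_upto \<Sigma>2 n) \<mu>1"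
      "supported_on T (outputs_upto \<Sigma>2 n) \<mu>2"
    unfolding \<mu>1_def \<mu>2_def by (auto intro: G_restrict supported_on_restrict)
  have x: "x \<noteq> []" using long by auto
  have prefix: "fst_run wt T L (init_conf T) [] + fst_run wt T L (init_conf T) x +
      mass wt T (outputs_upto \<Sigma>2 n) \<mu> \<le> 1"
    using accepted_plus_mass_le[OF L G_init supported_on_init_conf, of "{[], x}"] x
    unfolding mass_init_conf \<mu>_def n_def by simp
  have split: "mass wt T (outputs_upto \<Sigma>2 n) \<mu>1 + mass wt T (outputs_upto \<Sigma>2 n) \<mu>2 =
      mass wt T (outputs_upto \<Sigma>2 n) \<mu>"
    unfolding mass_def sum.distrib[symmetric] \<mu>1_def \<mu>2_def
    by (intro sum.cong refl) (simp add: wt_0)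
  have "fst_run wt T L1 \<mu> [] = fst_run wt T L1 \<mu>1 []"
    using L1 by (intro fst_run_cong[where K=K]) (auto intro: out_bounded simp: \<mu>1_def)
  also have "\<dots> \<le> mass wt T (outputs_upto \<Sigma>2 n) \<mu>1"
    using fst_run_le_mass[OF L1 inv12(1,3)] .
  finally have run1: "fst_run wt T L1 \<mu> [] \<le> mass wt T (outputs_upto \<Sigma>2 n) \<mu>1" .
  have "fst_run wt T L2 \<mu> x = fst_run wt T L2 \<mu>2 x"
    using L2 long by (intro fst_run_cong[where K=K]) (auto intro: out_bounded simp: \<mu>2_def)
  also have "\<dots> \<le> mass wt T (outputs_upto \<Sigma>2 n) \<mu>2"
    using fst_run_le_mass[OF L2 inv12(2,4)] .
  finally have run2: "fst_run wt T L2 \<mu> x \<le> mass wt T (outputs_upto \<Sigma>2 n) \<mu>2" .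
  show ?thesis
    using prefix split run1 run2 unfolding fst_run_append \<mu>_def by linarith
qed

lemma not_computes_R4_with_prob:
  assumes \<Sigma>1: "{1, 2, 3} \<subseteq> \<Sigma>1" and \<Sigma>2: "4 \<in> \<Sigma>2" and "\<alpha> > 1/2"
  shows "\<not> computes_with_prob \<Sigma>1 \<Sigma>2
    (\<lambda>w v. fst_run wt T (LEnd # map Sym v @ [REnd]) (init_conf T) w) \<alpha> R4"
proof
  assume computes: "computes_with_prob \<Sigma>1 \<Sigma>2
    (\<lambda>w v. fst_run wt T (LEnd # map Sym v @ [REnd]) (init_conf T) w) \<alpha> R4"
  define N where "N = 2 * K + 1"
  define L where "L = LEnd # map Sym (replicate N (1::nat))"
  have run: "fst_run wt T (L @ [Sym b, REnd]) (init_conf T) w \<ge> \<alpha>"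
    if "(replicate N 1 @ [b], w) \<in> R4" "b \<in> \<Sigma>1" "w \<in> lists \<Sigma>2" for b w
  proof -
    have "replicate N 1 @ [b] \<in> lists \<Sigma>1" using \<Sigma>1 that(2) by auto
    then have "fst_run wt T (LEnd # map Sym (replicate N 1 @ [b]) @ [REnd]) (init_conf T) w \<ge> \<alpha>"
      using computes that unfolding computes_with_prob_def by blast
    then show ?thesis by (simp add: L_def)
  qed
  have "(replicate N 1 @ [2], []) \<in> R4" "(replicate N 1 @ [3], replicate N 4) \<in> R4"
    unfolding R4_def by (fastforce intro: exI[of _ 0])+
  then have "\<alpha> \<le> fst_run wt T (L @ [Sym 2, REnd]) (init_conf T) []"
      "\<alpha> \<le> fst_run wt T (L @ [Sym 3, REnd]) (init_conf T) (replicate N 4)"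
    using run \<Sigma>1 \<Sigma>2 by (auto simp: in_lists_conv_set)
  moreover have "fst_run wt T (L @ [Sym 2, REnd]) (init_conf T) [] +
      fst_run wt T (L @ [Sym 3, REnd]) (init_conf T) (replicate N 4) \<le> 1"
    using \<Sigma>1 by (intro fst_run_empty_plus_long_le_1) (auto simp: L_def N_def tape_syms_def)
  ultimately show False using \<open>\<alpha> > 1/2\<close> by linarith
qed

end

definition unitary_on :: "nat set \<Rightarrow> (nat \<Rightarrow> nat \<Rightarrow> complex) \<Rightarrow> bool" where
  "unitary_on Q V \<longleftrightarrow>
     (\<forall>q\<in>Q. \<forall>q'\<in>Q. (\<Sum>p\<in>Q. V q p * cnj (V q' p)) = (if q = q' then 1 else 0))"

lemma unitary_preserves_norm:
  assumes fin: "finite Q" and unitary: "unitary_on Q V"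
  shows "(\<Sum>p\<in>Q. (cmod (\<Sum>q\<in>Q. c q * V q p))\<^sup>2) = (\<Sum>q\<in>Q. (cmod (c q))\<^sup>2)"
proof -
  have "complex_of_real (\<Sum>p\<in>Q. (cmod (\<Sum>q\<in>Q. c q * V q p))\<^sup>2)
      = (\<Sum>p\<in>Q. \<Sum>q\<in>Q. \<Sum>q'\<in>Q. c q * V q p * cnj (c q' * V q' p))"
    by (simp only: of_real_sum complex_norm_square cnj_sum sum_product)
  also have "\<dots> = (\<Sum>q\<in>Q. \<Sum>q'\<in>Q. c q * cnj (c q') * (\<Sum>p\<in>Q. V q p * cnj (V q' p)))"
    by (subst sum.swap, rule sum.cong[OF refl], subst sum.swap)
       (simp add: sum_distrib_left mult_ac)
  also have "\<dots> = (\<Sum>q\<in>Q. c q * cnj (c q))"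
    using unitary fin unfolding unitary_on_def by (simp add: if_distrib[of "\<lambda>x. _ * x"] sum.delta cong: if_cong)
  also have "\<dots> = complex_of_real (\<Sum>q\<in>Q. (cmod (c q))\<^sup>2)"
    by (simp only: of_real_sum complex_norm_square)
  finally show ?thesis using of_real_eq_iff by blast
qed

lemma out_length_bounded:
  assumes "fst_basic \<Sigma>1 \<Sigma>2 T" "finite \<Sigma>1"
  obtains K where "\<And>a q. a \<in> tape_syms \<Sigma>1 \<Longrightarrow> q \<in> states T \<Longrightarrow> length (out T a q) \<le> K"
proof
  show "length (out T a q) \<le> Max ((\<lambda>(a, q). length (out T a q)) ` (tape_syms \<Sigma>1 \<times> states T))"
    if "a \<in> tape_syms \<Sigma>1" "q \<in> states T" for a q
    using that assms fst_basicD(1)[OF assms(1)] by (intro Max_ge) (auto simp: tape_syms_def)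
qed

lemma pfst_conservative:
  assumes T: "is_pfst \<Sigma>1 \<Sigma>2 T" and "finite \<Sigma>2"
    and K: "\<And>a q. a \<in> tape_syms \<Sigma>1 \<Longrightarrow> q \<in> states T \<Longrightarrow> length (out T a q) \<le> K"
  shows "conservative_fst \<Sigma>1 \<Sigma>2 T K (\<lambda>r. r) (\<lambda>\<mu>. \<forall>q y. \<mu> q y \<ge> 0)"
proof
  show basic: "fst_basic \<Sigma>1 \<Sigma>2 T" using T unfolding is_pfst_def by blast
  have trans_nonneg: "trans T a q p \<ge> 0" if "a \<in> tape_syms \<Sigma>1" "q \<in> states T" for a q p
    using T that unfolding is_pfst_def fst_basic_def by (cases "p \<in> states T") auto
  show "\<forall>q y. fst_step T a \<mu> q y \<ge> 0" if "a \<in> tape_syms \<Sigma>1" "\<forall>q y. \<mu> q y \<ge> 0" for a \<mu>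
    using that trans_nonneg unfolding fst_step_def by (auto intro!: sum_nonneg)
  show "(\<Sum>p\<in>states T. fst_step T a \<mu> p x) = (\<Sum>q\<in>states T. emit T a \<mu> q x)"
    if a: "a \<in> tape_syms \<Sigma>1" for a \<mu> x
  proof -
    have "(\<Sum>p\<in>states T. fst_step T a \<mu> p x) =
        (\<Sum>q\<in>states T. emit T a \<mu> q x * (\<Sum>p\<in>states T. trans T a q p))"
      unfolding fst_step_emit by (subst sum.swap) (simp add: sum_distrib_left)
    then show ?thesis using T a unfolding is_pfst_def by simp
  qed
qed (use assms in \<open>auto simp: init_conf_def\<close>)

lemma qfst_conservative:
  assumes T: "is_qfst \<Sigma>1 \<Sigma>2 T" and "finite \<Sigma>2"
    and K: "\<And>a q. a \<in> tape_syms \<Sigma>1 \<Longrightarrow> q \<in> states T \<Longrightarrow> length (out T a q) \<le> K"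
  shows "conservative_fst \<Sigma>1 \<Sigma>2 T K (\<lambda>c. (cmod c)\<^sup>2) (\<lambda>_. True)"
proof
  show basic: "fst_basic \<Sigma>1 \<Sigma>2 T" using T unfolding is_qfst_def by blast
  show "(\<Sum>p\<in>states T. (cmod (fst_step T a \<mu> p x))\<^sup>2) = (\<Sum>q\<in>states T. (cmod (emit T a \<mu> q x))\<^sup>2)"
    if "a \<in> tape_syms \<Sigma>1" for a \<mu> x
    unfolding fst_step_emit
    by (rule unitary_preserves_norm[OF fst_basicD(1)[OF basic]])
      (use T that in \<open>simp add: is_qfst_def unitary_on_def\<close>)
qed (use assms in auto)

lemma pfst_not_computes_R4_with_prob:
  assumes "is_pfst {0,1,2,3} {4} T" "\<alpha> > 1/2"
  shows "\<not> computes_with_prob {0,1,2,3} {4} (pfst_prob T) \<alpha> R4"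
proof -
  obtain K where "\<And>a q. a \<in> tape_syms {0,1,2,3} \<Longrightarrow> q \<in> states T \<Longrightarrow> length (out T a q) \<le> K"
    using out_length_bounded assms(1) unfolding is_pfst_def by blast
  then interpret conservative_fst "{0,1,2,3}" "{4}" T K "\<lambda>r. r" "\<lambda>\<mu>. \<forall>q y. \<mu> q y \<ge> 0"
    using pfst_conservative assms(1) by blast
  show ?thesis
    using not_computes_R4_with_prob[OF _ _ assms(2)] unfolding pfst_prob_def by simp
qed

lemma qfst_not_computes_R4_with_prob:
  assumes "is_qfst {0,1,2,3} {4} T" "\<alpha> > 1/2"
  shows "\<not> computes_with_prob {0,1,2,3} {4} (qfst_prob T) \<alpha> R4"
proof -
  obtain K where "\<And>a q. a \<in> tape_syms {0,1,2,3} \<Longrightarrow> q \<in> states T \<Longrightarrow> length (out T a q) \<le> K"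
    using out_length_bounded assms(1) unfolding is_qfst_def by blast
  then interpret conservative_fst "{0,1,2,3}" "{4}" T K "\<lambda>c. (cmod c)\<^sup>2" "\<lambda>_. True"
    using qfst_conservative assms(1) by blast
  show ?thesis
    using not_computes_R4_with_prob[OF _ _ assms(2)] unfolding qfst_prob_def by simp
qed

section \<open>Splitting runs into counting branches\<close>

definition point_conf :: "(nat \<Rightarrow> 's::zero) \<Rightarrow> nat list \<Rightarrow> nat \<Rightarrow> nat list \<Rightarrow> 's" where
  "point_conf v w p x = (if x = w then v p else 0)"

definition state_step :: "('s::comm_ring_1, 'z) fst_scheme \<Rightarrow> nat sym \<Rightarrow> (nat \<Rightarrow> 's) \<Rightarrow> nat \<Rightarrow> 's" where
  "state_step T a v p = (\<Sum>q\<in>states T. v q * trans T a q p)"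

definition nonhalting_part :: "('s::zero, 'z) fst_scheme \<Rightarrow> (nat \<Rightarrow> 's) \<Rightarrow> nat \<Rightarrow> 's" where
  "nonhalting_part T v p = (if p \<in> nonhalting T then v p else 0)"

definition acc_weight :: "('s \<Rightarrow> real) \<Rightarrow> ('s, 'z) fst_scheme \<Rightarrow> (nat \<Rightarrow> 's) \<Rightarrow> real" where
  "acc_weight wt T v = (\<Sum>p\<in>acc T. wt (v p))"

lemma point_conf_zero: "point_conf (\<lambda>_. 0) w = (\<lambda>_ _. 0)"
  unfolding point_conf_def by (intro ext) simp

lemma point_conf_scale:
  fixes \<beta> :: "'s::mult_zero"
  shows "point_conf (\<lambda>p. \<beta> * v p) w = (\<lambda>p x. \<beta> * point_conf v w p x)"
  unfolding point_conf_def by (intro ext) simp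

lemma fst_step_point_conf:
  assumes "\<And>q. q \<in> states T \<Longrightarrow> v q \<noteq> 0 \<Longrightarrow> out T a q = u"
  shows "fst_step T a (point_conf v w) = point_conf (state_step T a v) (w @ u)"
proof (intro ext)
  fix p x
  have emit: "emit T a (point_conf v w) q x = (if x = w @ u then v q else 0)" if "q \<in> states T" for q
  proof (cases "v q = 0")
    case True
    then show ?thesis by (cases rule: emit_cases[of x T a q]) (simp_all add: point_conf_def)
  next
    case False
    then have "out T a q = u" using assms that by blast
    then show ?thesis by (cases rule: emit_cases[of x T a q]) (auto simp: point_conf_def)
  qed
  have "fst_step T a (point_conf v w) p x =
      (\<Sum>q\<in>states T. (if x = w @ u then v q else 0) * trans T a q p)"
    unfolding fst_step_emit using emit by (intro sum.cong) auto
  then show "fst_step T a (point_conf v w) p x = point_conf (state_step T a v) (w @ u) p x"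
    by (simp add: point_conf_def state_step_def)
qed

lemma restrict_nonhalting_point_conf:
  "restrict_nonhalting T (point_conf v w) = point_conf (nonhalting_part T v) w"
  unfolding restrict_nonhalting_def point_conf_def nonhalting_part_def by (intro ext) simp

lemma fst_run_point_conf_Cons:
  assumes "wt 0 = 0" and "\<And>q. q \<in> states T \<Longrightarrow> v q \<noteq> 0 \<Longrightarrow> out T a q = u"
  shows "fst_run wt T (a # as) (point_conf v w) x =
     (if x = w @ u then acc_weight wt T (state_step T a v) else 0) +
     fst_run wt T as (point_conf (nonhalting_part T (state_step T a v)) (w @ u)) x"
  using assms(1) fst_step_point_conf[OF assms(2)]
  by (simp add: restrict_nonhalting_point_conf acc_weight_def point_conf_def)

lemma fst_step_add:
  "fst_step T a (\<lambda>p y. \<mu>1 p y + \<mu>2 p y) = (\<lambda>p y. fst_step T a \<mu>1 p y + fst_step T a \<mu>2 p y)"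
proof -
  have "emit T a (\<lambda>p y. \<mu>1 p y + \<mu>2 p y) q y = emit T a \<mu>1 q y + emit T a \<mu>2 q y" for q y
    by (simp add: emit_def)
  then show ?thesis unfolding fst_step_emit by (intro ext) (simp add: sum.distrib[symmetric] distrib_right)
qed

lemma fst_step_scale: "fst_step T a (\<lambda>p y. \<beta> * \<mu> p y) = (\<lambda>p y. \<beta> * fst_step T a \<mu> p y)"
proof -
  have "emit T a (\<lambda>p y. \<beta> * \<mu> p y) q y = \<beta> * emit T a \<mu> q y" for q y
    by (simp add: emit_def)
  then show ?thesis unfolding fst_step_emit by (intro ext) (simp add: sum_distrib_left mult.assoc)
qed

lemma fst_run_zero: "wt 0 = 0 \<Longrightarrow> fst_run wt T as (\<lambda>_ _. 0) x = 0"
proof (induction as)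
  case Nil
  then show ?case by simp
next
  case (Cons a as)
  have "fst_step T a (\<lambda>_ _. 0) = (\<lambda>_ _. 0)" "restrict_nonhalting T (\<lambda>_ _. 0) = (\<lambda>_ _. 0)"
    unfolding fst_step_def restrict_nonhalting_def by (auto intro!: ext sum.neutral)
  then show ?case using Cons by simp
qed

lemma fst_run_scale:
  assumes wt_mult: "\<And>a b. wt (a * b) = wt a * wt b"
  shows "fst_run wt T as (\<lambda>p y. \<beta> * \<mu> p y) x = wt \<beta> * fst_run wt T as \<mu> x"
proof (induction as arbitrary: \<mu>)
  case Nil
  then show ?case by simp
next
  case (Cons a as)
  have "restrict_nonhalting T (\<lambda>p y. \<beta> * \<mu> p y) = (\<lambda>p y. \<beta> * restrict_nonhalting T \<mu> p y)"
    for \<mu> :: "nat \<Rightarrow> nat list \<Rightarrow> 'a"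
    unfolding restrict_nonhalting_def by (intro ext) simp
  then show ?case using Cons by (simp add: fst_step_scale wt_mult sum_distrib_left distrib_left)
qed

definition closed_branch :: "('s::zero, 'z) fst_scheme \<Rightarrow> nat sym \<Rightarrow> nat set \<Rightarrow> nat set \<Rightarrow> bool" where
  "closed_branch T a N A \<longleftrightarrow> (\<forall>q\<in>N. \<forall>p. trans T a q p \<noteq> 0 \<longrightarrow>
     (p \<in> nonhalting T \<longrightarrow> p \<in> N) \<and> (p \<in> acc T \<longrightarrow> p \<in> A))"

lemma fst_step_closed_branch:
  assumes "closed_branch T a N A" "\<And>p x. p \<notin> N \<Longrightarrow> \<mu> p x = 0" "fst_step T a \<mu> p x \<noteq> 0"
  shows "(p \<in> nonhalting T \<longrightarrow> p \<in> N) \<and> (p \<in> acc T \<longrightarrow> p \<in> A)"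
proof -
  obtain q where "q \<in> states T" and nz: "emit T a \<mu> q x * trans T a q p \<noteq> 0"
    using assms(3) unfolding fst_step_emit by (meson sum.neutral)
  then have "emit T a \<mu> q x \<noteq> 0" "trans T a q p \<noteq> 0" by auto
  moreover from this(1) have "q \<in> N"
    using assms(2) by (cases rule: emit_cases[of x T a q]) auto
  ultimately show ?thesis using assms(1) unfolding closed_branch_def by blast
qed

lemma fst_run_add:
  assumes wt_0: "wt 0 = 0" and "N1 \<inter> N2 = {}" and "A1 \<inter> A2 = {}"
    and "\<And>a. a \<in> set as \<Longrightarrow> closed_branch T a N1 A1 \<and> closed_branch T a N2 A2"
    and "\<And>p x. p \<notin> N1 \<Longrightarrow> \<mu>1 p x = 0" and "\<And>p x. p \<notin> N2 \<Longrightarrow> \<mu>2 p x = 0"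
  shows "fst_run wt T as (\<lambda>p y. \<mu>1 p y + \<mu>2 p y) x = fst_run wt T as \<mu>1 x + fst_run wt T as \<mu>2 x"
  using assms(4-)
proof (induction as arbitrary: \<mu>1 \<mu>2)
  case Nil
  then show ?case by simp
next
  case (Cons a as)
  let ?s1 = "fst_step T a \<mu>1" and ?s2 = "fst_step T a \<mu>2"
  have c1: "closed_branch T a N1 A1" and c2: "closed_branch T a N2 A2" using Cons.prems by auto
  have out1: "(p \<in> nonhalting T \<longrightarrow> p \<in> N1) \<and> (p \<in> acc T \<longrightarrow> p \<in> A1)"
    if "?s1 p y \<noteq> 0" for p y
    by (rule fst_step_closed_branch[OF c1 _ that]) (rule Cons.prems(2))
  have out2: "(p \<in> nonhalting T \<longrightarrow> p \<in> N2) \<and> (p \<in> acc T \<longrightarrow> p \<in> A2)"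
    if "?s2 p y \<noteq> 0" for p y
    by (rule fst_step_closed_branch[OF c2 _ that]) (rule Cons.prems(3))
  have "wt (?s1 p x + ?s2 p x) = wt (?s1 p x) + wt (?s2 p x)" if "p \<in> acc T" for p
  proof -
    have "?s1 p x = 0 \<or> ?s2 p x = 0" using out1 out2 that assms(3) by blast
    then show ?thesis using wt_0 by auto
  qed
  then have acc: "(\<Sum>p\<in>acc T. wt (?s1 p x + ?s2 p x)) =
      (\<Sum>p\<in>acc T. wt (?s1 p x)) + (\<Sum>p\<in>acc T. wt (?s2 p x))"
    by (simp add: sum.distrib[symmetric])
  have restrict_add: "restrict_nonhalting T (\<lambda>p y. ?s1 p y + ?s2 p y) =
      (\<lambda>p y. restrict_nonhalting T ?s1 p y + restrict_nonhalting T ?s2 p y)"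
    unfolding restrict_nonhalting_def by (intro ext) simp
  have "restrict_nonhalting T ?s1 p y = 0" if "p \<notin> N1" for p y
    using out1[of p y] that unfolding restrict_nonhalting_def by auto
  moreover have "restrict_nonhalting T ?s2 p y = 0" if "p \<notin> N2" for p y
    using out2[of p y] that unfolding restrict_nonhalting_def by auto
  ultimately have "fst_run wt T as (\<lambda>p y. restrict_nonhalting T ?s1 p y + restrict_nonhalting T ?s2 p y) x =
      fst_run wt T as (restrict_nonhalting T ?s1) x + fst_run wt T as (restrict_nonhalting T ?s2) x"
    using Cons.prems(1) by (intro Cons.IH) auto
  then show ?case unfolding fst_run.simps fst_step_add acc restrict_add by simp
qed

text \<open>\<open>switch_weight p q ones u\<close> is the product of a factor \<open>q\<close> for every switch from
  reading \<open>0\<close>s to reading \<open>1\<close>s in \<open>u\<close> and a factor \<open>p\<close> for every switch back, starting in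
  the mode given by \<open>ones\<close>.\<close>

fun switch_weight :: "real \<Rightarrow> real \<Rightarrow> bool \<Rightarrow> nat list \<Rightarrow> real" where
  "switch_weight p q ones [] = 1"
| "switch_weight p q ones (c # u) =
     (if c = 0 then if ones then p else 1 else if ones then 1 else q) * switch_weight p q (c \<noteq> 0) u"

lemma switch_weight_bounds:
  assumes "0 \<le> p" "p \<le> 1" "0 \<le> q" "q \<le> 1"
  shows "0 \<le> switch_weight p q ones u \<and> switch_weight p q ones u \<le> 1"
  using assms by (induction u arbitrary: ones) (auto intro: mult_le_one)

lemma switch_weight_ones: "switch_weight p q True (replicate n 1) = 1"
  by (induction n) auto

lemma switch_weight_sorted:
  assumes "q \<le> 1"
  shows "q \<le> switch_weight p q False (replicate m 0 @ replicate n 1)"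
proof (induction m)
  case 0
  then show ?case using assms switch_weight_ones by (cases n) auto
qed simp

lemma switch_weight_unsorted_ones:
  assumes "0 \<le> p" "p \<le> 1" "0 \<le> q" "q \<le> 1"
  shows "u \<in> lists {0, 1} \<Longrightarrow> (\<And>n. u \<noteq> replicate n 1) \<Longrightarrow> switch_weight p q True u \<le> p"
proof (induction u)
  case Nil
  then show ?case using Nil.prems(2)[of 0] by simp
next
  case (Cons c u)
  show ?case
  proof (cases "c = 0")
    case True
    then show ?thesis
      using switch_weight_bounds[OF assms] assms(1) by (simp add: mult_left_le)
  next
    case False
    then have "c = 1" using Cons.prems(1) by auto
    moreover have "u \<noteq> replicate n 1" for n using Cons.prems(2)[of "Suc n"] \<open>c = 1\<close> by auto
    ultimately show ?thesis using Cons by simp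
  qed
qed

lemma switch_weight_unsorted:
  assumes "0 \<le> p" "p \<le> 1" "0 \<le> q" "q \<le> 1"
  shows "u \<in> lists {0, 1} \<Longrightarrow> (\<And>m n. u \<noteq> replicate m 0 @ replicate n 1) \<Longrightarrow>
    switch_weight p q False u \<le> q * p"
proof (induction u)
  case Nil
  then show ?case using Nil.prems(2)[of 0 0] by simp
next
  case (Cons c u)
  show ?case
  proof (cases "c = 0")
    case True
    have "u \<noteq> replicate m 0 @ replicate n 1" for m n
      using Cons.prems(2)[of "Suc m" n] True by auto
    then show ?thesis using Cons True by simp
  next
    case False
    then have "c = 1" using Cons.prems(1) by auto
    have "u \<noteq> replicate n 1" for n using Cons.prems(2)[of 0 "Suc n"] \<open>c = 1\<close> by auto
    then have "switch_weight p q True u \<le> p"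
      using switch_weight_unsorted_ones[OF assms] Cons.prems(1) by auto
    then show ?thesis using \<open>c = 1\<close> assms(3) by (simp add: mult_left_mono)
  qed
qed

definition branch_run :: "('s \<Rightarrow> real) \<Rightarrow> ('s::comm_ring_1, 'z) fst_scheme \<Rightarrow> (nat \<Rightarrow> 's) \<Rightarrow>
    nat list \<Rightarrow> nat list \<Rightarrow> nat list \<Rightarrow> real" where
  "branch_run wt T E w v x = fst_run wt T (map Sym v @ [REnd]) (point_conf E w) x"

text \<open>A branch of a transducer that checks its input to be of the form \<open>0\<^sup>m 1\<^sup>n l\<close>, with output
  \<open>ou a\<close> for every symbol \<open>a\<close>.  While reading \<open>0\<close>s it is in the state vector \<open>e0\<close>, while
  reading \<open>1\<close>s in \<open>e1\<close>; switching from \<open>e0\<close> to \<open>e1\<close> keeps the amplitude \<open>qq\<close>, switching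
  back only \<open>pp\<close>, and the rest is rejected.\<close>

locale counting_branch =
  fixes T :: "('s::comm_ring_1, 'z) fst_scheme" and wt :: "'s \<Rightarrow> real"
    and S :: "nat set" and ou :: "nat sym \<Rightarrow> nat list"
    and e0 e1 f0 f1 :: "nat \<Rightarrow> 's" and l l' :: nat and pp qq :: 's
  assumes wt_0: "wt 0 = 0" and wt_mult: "\<And>a b. wt (a * b) = wt a * wt b"
    and wt_pp: "0 \<le> wt pp" "wt pp \<le> 1" and wt_qq: "0 \<le> wt qq" "wt qq \<le> 1"
    and out_branch: "\<And>a q. q \<in> states T \<Longrightarrow> q \<in> S \<Longrightarrow> out T a q = ou a"
    and out_silent: "ou (Sym l) = []" "ou REnd = []"
    and support: "\<And>E p. E \<in> {e0, e1, f0, f1} \<Longrightarrow> p \<notin> S \<Longrightarrow> E p = 0"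
    and step_e0_0: "nonhalting_part T (state_step T (Sym 0) e0) = e0"
    and step_e1_0: "nonhalting_part T (state_step T (Sym 0) e1) = (\<lambda>p. pp * e0 p)"
    and step_e0_1: "nonhalting_part T (state_step T (Sym 1) e0) = (\<lambda>p. qq * e1 p)"
    and step_e1_1: "nonhalting_part T (state_step T (Sym 1) e1) = e1"
    and step_e0_l: "nonhalting_part T (state_step T (Sym l) e0) = f0"
    and step_e1_l: "nonhalting_part T (state_step T (Sym l) e1) = f1"
    and step_e_dead: "\<And>E a. E \<in> {e0, e1} \<Longrightarrow> a \<in> {Sym l', REnd} \<Longrightarrow>
      nonhalting_part T (state_step T a E) = (\<lambda>_. 0)"
    and step_f_dead: "\<And>F c. F \<in> {f0, f1} \<Longrightarrow> c \<in> {0, 1, l, l'} \<Longrightarrow>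
      nonhalting_part T (state_step T (Sym c) F) = (\<lambda>_. 0)"
    and acc_e: "\<And>E a. E \<in> {e0, e1} \<Longrightarrow> a \<in> {Sym 0, Sym 1, Sym l, Sym l', REnd} \<Longrightarrow>
      acc_weight wt T (state_step T a E) = 0"
    and acc_f: "\<And>F c. F \<in> {f0, f1} \<Longrightarrow> c \<in> {0, 1, l, l'} \<Longrightarrow>
      acc_weight wt T (state_step T (Sym c) F) = 0"
    and acc_f_end: "\<And>F. F \<in> {f0, f1} \<Longrightarrow> acc_weight wt T (state_step T REnd F) = 1"
begin

lemma fst_run_branch_Cons:
  assumes "E \<in> {e0, e1, f0, f1}"
  shows "fst_run wt T (a # as) (point_conf E w) x =
    (if x = w @ ou a then acc_weight wt T (state_step T a E) else 0) +
    fst_run wt T as (point_conf (nonhalting_part T (state_step T a E)) (w @ ou a)) x"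
  using assms support out_branch by (intro fst_run_point_conf_Cons wt_0) blast

lemma branch_run_Cons:
  "E \<in> {e0, e1, f0, f1} \<Longrightarrow> branch_run wt T E w (c # v) x =
    (if x = w @ ou (Sym c) then acc_weight wt T (state_step T (Sym c) E) else 0) +
    branch_run wt T (nonhalting_part T (state_step T (Sym c) E)) (w @ ou (Sym c)) v x"
  unfolding branch_run_def list.map(2) append_Cons by (rule fst_run_branch_Cons)

lemma branch_run_Nil:
  "E \<in> {e0, e1, f0, f1} \<Longrightarrow>
    branch_run wt T E w [] x = (if x = w then acc_weight wt T (state_step T REnd E) else 0)"
  unfolding branch_run_def using fst_run_branch_Cons[of E REnd "[]"] out_silent by simp

lemma branch_run_scale: "branch_run wt T (\<lambda>p. \<beta> * E p) w v x = wt \<beta> * branch_run wt T E w v x"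
  unfolding branch_run_def point_conf_scale by (rule fst_run_scale[OF wt_mult])

lemma branch_run_zero: "branch_run wt T (\<lambda>_. 0) w v x = 0"
  unfolding branch_run_def point_conf_zero by (rule fst_run_zero[where wt = wt, OF wt_0])

lemma branch_run_final:
  assumes F: "F \<in> {f0, f1}" and "v \<in> lists {0, 1, l, l'}"
  shows "branch_run wt T F w v x = (if v = [] \<and> x = w then 1 else 0)"
proof (cases v)
  case Nil
  then show ?thesis using F branch_run_Nil[of F] acc_f_end[OF F] by auto
next
  case (Cons c v')
  then have "c \<in> {0, 1, l, l'}" using assms(2) by simp
  then show ?thesis
    using Cons F branch_run_Cons[of F] acc_f step_f_dead branch_run_zero by auto
qed

lemma branch_run_count_step:
  assumes "c \<in> {0, 1}"
  shows "branch_run wt T (if ones then e1 else e0) w (c # v) x =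
    (if c = 0 then if ones then wt pp else 1 else if ones then 1 else wt qq) *
    branch_run wt T (if c \<noteq> 0 then e1 else e0) (w @ ou (Sym c)) v x"
  using assms branch_run_Cons[of "if ones then e1 else e0"] acc_e
    step_e0_0 step_e1_0 step_e0_1 step_e1_1 branch_run_scale
  by (cases ones) auto

lemma branch_run_well_formed:
  "u \<in> lists {0, 1} \<Longrightarrow> branch_run wt T (if ones then e1 else e0) w (u @ [l]) x =
    (if x = w @ concat (map (ou \<circ> Sym) u) then switch_weight (wt pp) (wt qq) ones u else 0)"
proof (induction u arbitrary: ones w)
  case Nil
  have "branch_run wt T (if ones then e1 else e0) w [l] x =
      branch_run wt T (if ones then f1 else f0) w [] x"
    using branch_run_Cons[of "if ones then e1 else e0"] acc_e step_e0_l step_e1_l out_silent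
    by (cases ones) auto
  then show ?case using branch_run_final[of "if ones then f1 else f0"] by auto
next
  case (Cons c u)
  then show ?case using branch_run_count_step[of c ones] by auto
qed

lemma branch_run_ill_formed:
  "v \<in> lists {0, 1, l, l'} \<Longrightarrow> (\<And>u. u \<in> lists {0, 1} \<Longrightarrow> v \<noteq> u @ [l]) \<Longrightarrow>
    branch_run wt T (if ones then e1 else e0) w v x = 0"
proof (induction v arbitrary: ones w)
  case Nil
  then show ?case using branch_run_Nil[of "if ones then e1 else e0"] acc_e by auto
next
  case (Cons c v)
  consider "c \<in> {0, 1}" | "c = l" | "c = l'" using Cons.prems(1) by auto
  then show ?case
  proof cases
    case 1
    have "v \<noteq> u @ [l]" if "u \<in> lists {0, 1}" for u
      using Cons.prems(2)[of "c # u"] that 1 by auto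
    then show ?thesis using Cons.IH Cons.prems(1) branch_run_count_step[OF 1] by auto
  next
    case 2
    then have "v \<noteq> []" using Cons.prems(2)[of "[]"] by auto
    then show ?thesis
      using 2 Cons.prems(1) branch_run_Cons[of "if ones then e1 else e0"] acc_e
        step_e0_l step_e1_l branch_run_final[of "if ones then f1 else f0"]
      by (cases ones) auto
  next
    case 3
    then show ?thesis
      using branch_run_Cons[of "if ones then e1 else e0"] acc_e step_e_dead branch_run_zero
      by (cases ones) auto
  qed
qed

lemma branch_run_nonneg:
  assumes "v \<in> lists {0, 1, l, l'}"
  shows "0 \<le> branch_run wt T e0 w v x"
proof (cases "\<exists>u \<in> lists {0, 1}. v = u @ [l]")
  case True
  then obtain u where u: "u \<in> lists {0, 1}" "v = u @ [l]" by blast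
  then show ?thesis
    using branch_run_well_formed[OF u(1), of False] switch_weight_bounds[OF wt_pp wt_qq] by auto
next
  case False
  then show ?thesis using branch_run_ill_formed[OF assms, of False] by auto
qed

lemma branch_run_sorted:
  "wt qq \<le> branch_run wt T e0 w (replicate m 0 @ replicate n 1 @ [l])
     (w @ concat (replicate m (ou (Sym 0))) @ concat (replicate n (ou (Sym 1))))"
proof -
  have "replicate m 0 @ replicate n 1 \<in> lists {0, 1}" by auto
  from branch_run_well_formed[OF this, of False] show ?thesis
    using switch_weight_sorted[OF wt_qq(2)] by (simp add: map_replicate_const)
qed

lemma branch_run_unsorted:
  assumes "v \<in> lists {0, 1, l, l'}"
    and "\<And>m n. v = replicate m 0 @ replicate n 1 @ [l] \<Longrightarrow>
      x \<noteq> w @ concat (replicate m (ou (Sym 0))) @ concat (replicate n (ou (Sym 1)))"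
  shows "branch_run wt T e0 w v x \<le> wt qq * wt pp"
proof (cases "\<exists>u \<in> lists {0, 1}. v = u @ [l] \<and> x = w @ concat (map (ou \<circ> Sym) u)")
  case True
  then obtain u where u: "u \<in> lists {0, 1}" "v = u @ [l]" "x = w @ concat (map (ou \<circ> Sym) u)"
    by blast
  have "u \<noteq> replicate m 0 @ replicate n 1" for m n
    using assms(2)[of m n] u by (auto simp: map_replicate_const)
  then show ?thesis
    using branch_run_well_formed[OF u(1), of False] u switch_weight_unsorted[OF wt_pp wt_qq u(1)]
    by simp
next
  case no_match: False
  have "branch_run wt T e0 w v x = 0"
  proof (cases "\<exists>u \<in> lists {0, 1}. v = u @ [l]")
    case True
    then obtain u where u: "u \<in> lists {0, 1}" "v = u @ [l]" by blast
    then have "x \<noteq> w @ concat (map (ou \<circ> Sym) u)" using no_match by blast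
    then show ?thesis using branch_run_well_formed[OF u(1), of False] u(2) by simp
  next
    case False
    then show ?thesis using branch_run_ill_formed[OF assms(1), of False] by auto
  qed
  then show ?thesis using wt_pp wt_qq by simp
qed

end

lemma R4_iff: "(v, w) \<in> R4 \<longleftrightarrow>
   (\<exists>m n. v = replicate m 0 @ replicate n 1 @ [2] \<and>
      w = [] @ concat (replicate m [4]) @ concat (replicate n [])) \<or>
   (\<exists>m n. v = replicate m 0 @ replicate n 1 @ [3] \<and>
      w = [] @ concat (replicate m []) @ concat (replicate n [4]))"
proof -
  have "concat (replicate m [x]) = replicate m x" for m and x :: nat
    by (induction m) auto
  then show ?thesis unfolding R4_def by auto
qed

locale R4_transducer =
  A: counting_branch T wt SA ouA eA0 eA1 fA0 fA1 2 3 pp qq +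
  B: counting_branch T wt SB ouB eB0 eB1 fB0 fB1 3 2 pp qq
  for T :: "('s::comm_ring_1, 'z) fst_scheme" and wt SA SB ouA ouB eA0 eA1 fA0 fA1
    eB0 eB1 fB0 fB1 pp qq +
  fixes cA cB :: 's and NA NB AA AB :: "nat set"
  assumes out_A: "ouA (Sym 0) = [4]" "ouA (Sym 1) = []"
    and out_B: "ouB (Sym 0) = []" "ouB (Sym 1) = [4]"
    and step_init: "restrict_nonhalting T (fst_step T LEnd (init_conf T)) =
      (\<lambda>p x. cA * point_conf eA0 [] p x + cB * point_conf eB0 [] p x)"
    and acc_init: "\<And>x. (\<Sum>p\<in>acc T. wt (fst_step T LEnd (init_conf T) p x)) = 0"
    and disjoint: "NA \<inter> NB = {}" "AA \<inter> AB = {}"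
    and closed: "\<And>a. a \<in> {Sym 0, Sym 1, Sym 2, Sym 3, REnd} \<Longrightarrow>
      closed_branch T a NA AA \<and> closed_branch T a NB AB"
    and support_init: "\<And>p. p \<notin> NA \<Longrightarrow> eA0 p = 0" "\<And>p. p \<notin> NB \<Longrightarrow> eB0 p = 0"
    and wt_init: "0 \<le> wt cA" "0 \<le> wt cB"
begin

lemma fst_run_eq_branches:
  assumes v: "v \<in> lists {0, 1, 2, 3}"
  shows "fst_run wt T (LEnd # map Sym v @ [REnd]) (init_conf T) w =
    wt cA * branch_run wt T eA0 [] v w + wt cB * branch_run wt T eB0 [] v w"
proof -
  let ?L = "map Sym v @ [REnd]"
  have "fst_run wt T (LEnd # ?L) (init_conf T) w =
      fst_run wt T ?L (\<lambda>p x. cA * point_conf eA0 [] p x + cB * point_conf eB0 [] p x) w"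
    using acc_init step_init by simp
  also have "\<dots> = fst_run wt T ?L (\<lambda>p x. cA * point_conf eA0 [] p x) w +
      fst_run wt T ?L (\<lambda>p x. cB * point_conf eB0 [] p x) w"
    using v closed support_init
    by (intro fst_run_add[where wt = wt, OF A.wt_0 disjoint]) (auto simp: point_conf_def)
  finally show ?thesis unfolding branch_run_def fst_run_scale[OF A.wt_mult] .
qed

lemma fst_run_R4_lower:
  assumes "(v, w) \<in> R4"
  shows "min (wt cA) (wt cB) * wt qq \<le> fst_run wt T (LEnd # map Sym v @ [REnd]) (init_conf T) w"
proof -
  have v: "v \<in> lists {0, 1, 2, 3}" using assms unfolding R4_def by auto
  then have "v \<in> lists {0, 1, 3, 2}" by (simp add: insert_commute)
  note run = fst_run_eq_branches[OF v, of w]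
    and nonneg = A.branch_run_nonneg[OF v, of "[]" w] B.branch_run_nonneg[OF this, of "[]" w]
  have qq: "0 \<le> wt qq" using A.wt_qq by simp
  from assms consider (A) m n where "v = replicate m 0 @ replicate n 1 @ [2]"
      "w = [] @ concat (replicate m (ouA (Sym 0))) @ concat (replicate n (ouA (Sym 1)))"
    | (B) m n where "v = replicate m 0 @ replicate n 1 @ [3]"
      "w = [] @ concat (replicate m (ouB (Sym 0))) @ concat (replicate n (ouB (Sym 1)))"
    unfolding R4_iff out_A out_B by blast
  then show ?thesis
  proof cases
    case A
    have "wt qq \<le> branch_run wt T eA0 [] v w"
      using A.branch_run_sorted[of "[]" m n] unfolding A .
    then have "wt cA * wt qq \<le> fst_run wt T (LEnd # map Sym v @ [REnd]) (init_conf T) w"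
      using run nonneg wt_init by (simp add: add_increasing2 mult_left_mono)
    then show ?thesis using qq by (meson min.cobounded1 mult_right_mono order_trans)
  next
    case B
    have "wt qq \<le> branch_run wt T eB0 [] v w"
      using B.branch_run_sorted[of "[]" m n] unfolding B .
    then have "wt cB * wt qq \<le> fst_run wt T (LEnd # map Sym v @ [REnd]) (init_conf T) w"
      using run nonneg wt_init by (simp add: add_increasing mult_left_mono)
    then show ?thesis using qq by (meson min.cobounded2 mult_right_mono order_trans)
  qed
qed

lemma fst_run_non_R4_upper:
  assumes v: "v \<in> lists {0, 1, 2, 3}" and "(v, w) \<notin> R4"
  shows "fst_run wt T (LEnd # map Sym v @ [REnd]) (init_conf T) w \<le> (wt cA + wt cB) * wt qq * wt pp"
proof -
  have vB: "v \<in> lists {0, 1, 3, 2}" using v by (simp add: insert_commute)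
  have "branch_run wt T eA0 [] v w \<le> wt qq * wt pp"
    by (intro A.branch_run_unsorted[OF v]) (use assms(2) in \<open>unfold R4_iff out_A, blast\<close>)
  moreover have "branch_run wt T eB0 [] v w \<le> wt qq * wt pp"
    by (intro B.branch_run_unsorted[OF vB]) (use assms(2) in \<open>unfold R4_iff out_B, blast\<close>)
  ultimately show ?thesis
    using fst_run_eq_branches[OF v, of w] wt_init
    by (simp add: distrib_right mult.assoc add_mono mult_left_mono)
qed

lemma computes_isolated_R4:
  assumes gap: "(wt cA + wt cB) * wt qq * wt pp < min (wt cA) (wt cB) * wt qq"
    and "min (wt cA) (wt cB) \<le> 1"
  shows "computes_isolated {0, 1, 2, 3} {4}
    (\<lambda>w v. fst_run wt T (LEnd # map Sym v @ [REnd]) (init_conf T) w) R4"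
proof -
  define lo where "lo = min (wt cA) (wt cB) * wt qq"
  define hi where "hi = (wt cA + wt cB) * wt qq * wt pp"
  have "0 \<le> hi" unfolding hi_def using wt_init A.wt_pp A.wt_qq by simp
  moreover have "lo \<le> 1" unfolding lo_def using assms(2) A.wt_qq wt_init by (simp add: mult_le_one)
  moreover have "hi < lo" using gap unfolding lo_def hi_def .
  ultimately have bounds: "0 < (lo + hi) / 2" "(lo + hi) / 2 < 1" "0 < (lo - hi) / 2" by auto
  show ?thesis
    unfolding computes_isolated_def
  proof (rule exI[of _ "(lo + hi) / 2"], rule exI[of _ "(lo - hi) / 2"], intro conjI ballI impI)
    fix v w assume v: "v \<in> lists {0, 1, 2, 3 :: nat}"
    have sum: "(lo + hi) / 2 + (lo - hi) / 2 = lo" and diff: "(lo + hi) / 2 - (lo - hi) / 2 = hi"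
      by (simp_all add: field_simps)
    show "(lo + hi) / 2 + (lo - hi) / 2 \<le> fst_run wt T (LEnd # map Sym v @ [REnd]) (init_conf T) w"
      if "(v, w) \<in> R4"
      using fst_run_R4_lower[OF that, folded lo_def] by (simp only: sum)
    show "fst_run wt T (LEnd # map Sym v @ [REnd]) (init_conf T) w \<le> (lo + hi) / 2 - (lo - hi) / 2"
      if "(v, w) \<notin> R4"
      using fst_run_non_R4_upper[OF v that, folded hi_def] by (simp only: diff)
  qed (fact bounds)+
qed

end

section \<open>A probabilistic and a quantum transducer for R4\<close>

definition ket :: "nat \<Rightarrow> nat \<Rightarrow> 's::{zero,one}" where
  "ket q p = (if p = q then 1 else 0)"

lemma state_step_ket:
  "finite (states T) \<Longrightarrow> q \<in> states T \<Longrightarrow> state_step T a (ket q) p = trans T a q p"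
  unfolding state_step_def ket_def by (simp add: if_distrib[of "\<lambda>x. x * _"] sum.delta cong: if_cong)

lemma init_conf_eq_point_conf: "init_conf T = point_conf (ket (init T)) []"
  unfolding init_conf_def point_conf_def ket_def by (intro ext) auto

lemma tape_syms_R4: "tape_syms {0,1,2,3} = {Sym 0, Sym 1, Sym 2, Sym 3, LEnd, REnd}"
  unfolding tape_syms_def by auto

definition count_out :: "nat \<Rightarrow> nat sym \<Rightarrow> nat list" where
  "count_out c a = (if a = Sym c then [4] else [])"

text \<open>In both transducers below state \<open>0\<close> is initial; branch \<open>A\<close> lives on the states
  \<open>1\<close> (reading \<open>0\<close>s), \<open>2\<close> (reading \<open>1\<close>s) and \<open>5\<close>, \<open>6\<close> (after reading \<open>2\<close>), branch \<open>B\<close> on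
  \<open>3\<close>, \<open>4\<close>, \<open>7\<close>, \<open>8\<close> in the same way; \<open>9\<close> to \<open>12\<close> accept and the remaining states reject.\<close>

definition out_R4 :: "nat sym \<Rightarrow> nat \<Rightarrow> nat list" where
  "out_R4 a q = (if q \<in> {1,2,5,6} then count_out 0 a else if q \<in> {3,4,7,8} then count_out 1 a else [])"

definition pfst_R4_next :: "nat sym \<Rightarrow> nat \<Rightarrow> nat" where
  "pfst_R4_next a q = (if q \<notin> {0..8} then q else
     (case a of
       LEnd \<Rightarrow> q
     | REnd \<Rightarrow> (if q \<in> {5,6,7,8} then q + 4 else 13)
     | Sym b \<Rightarrow>
        (if b = 0 then (if q = 1 then 1 else if q = 3 then 3 else 13)
         else if b = 1 then (if q \<in> {1,2} then 2 else if q \<in> {3,4} then 4 else 13)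
         else if b = 2 then (if q = 1 then 5 else if q = 2 then 6 else 13)
         else if b = 3 then (if q = 3 then 7 else if q = 4 then 8 else 13)
         else 13)))"

definition pfst_R4_trans :: "nat sym \<Rightarrow> nat \<Rightarrow> nat \<Rightarrow> real" where
  "pfst_R4_trans a q p = (if a = LEnd \<and> q = 0 then (if p = 1 \<or> p = 3 then 1/2 else 0)
     else if p = pfst_R4_next a q then 1 else 0)"

definition pfst_R4 :: "real fst" where
  "pfst_R4 = \<lparr>states = {0..13}, init = 0, acc = {9..12}, rej = {13},
     trans = pfst_R4_trans, out = out_R4\<rparr>"

lemma pfst_R4_simps:
  "states pfst_R4 = {0..13}" "init pfst_R4 = 0" "acc pfst_R4 = {9..12}" "rej pfst_R4 = {13}"
  "trans pfst_R4 = pfst_R4_trans" "out pfst_R4 = out_R4" "nonhalting pfst_R4 = {0..8}"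
  unfolding pfst_R4_def nonhalting_def by auto

lemma pfst_R4_next_range: "q \<in> {0..13} \<Longrightarrow> pfst_R4_next a q \<in> {0..13}"
  unfolding pfst_R4_next_def by (auto split: sym.splits)

lemma is_pfst_pfst_R4: "is_pfst {0,1,2,3} {4} pfst_R4"
proof -
  have rows: "(\<Sum>p\<in>{0..13}. pfst_R4_trans a q p) = 1" if "q \<in> {0..13::nat}" for a q
  proof (cases "a = LEnd \<and> q = 0")
    case True
    have "(\<Sum>p\<in>{0..13}. pfst_R4_trans a q p) = (\<Sum>p\<in>{0..13::nat}. if p \<in> {1,3} then 1/2 else 0)"
      unfolding pfst_R4_trans_def using True by (intro sum.cong) auto
    also have "\<dots> = (\<Sum>p\<in>{0..13::nat} \<inter> {1,3}. 1/2)"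
      by (rule sum.inter_restrict[symmetric]) simp
    also have "{0..13::nat} \<inter> {1,3} = {1,3}" by auto
    finally show ?thesis by simp
  next
    case False
    then have "(\<Sum>p\<in>{0..13}. pfst_R4_trans a q p) =
        (\<Sum>p\<in>{0..13::nat}. if p = pfst_R4_next a q then 1 else 0)"
      unfolding pfst_R4_trans_def by (intro sum.cong) auto
    then show ?thesis using pfst_R4_next_range[OF that, of a] by simp
  qed
  have "pfst_R4_trans a q p = 0" if "q \<in> {0..13}" "p \<notin> {0..13}" for a q p
    using pfst_R4_next_range[OF that(1), of a] that(2) unfolding pfst_R4_trans_def by auto
  then have "fst_basic {0,1,2,3} {4} pfst_R4"
    unfolding fst_basic_def pfst_R4_simps by (auto simp: out_R4_def count_out_def)
  then show ?thesis
    unfolding is_pfst_def pfst_R4_simps using rows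
    by (auto simp: pfst_R4_trans_def pfst_R4_next_def)
qed

lemmas pfst_R4_unfold = pfst_R4_simps state_step_ket pfst_R4_trans_def pfst_R4_next_def
  ket_def nonhalting_part_def acc_weight_def

lemma pfst_R4_transducer:
  "R4_transducer pfst_R4 (\<lambda>r. r) {1,2,5,6} {3,4,7,8} (count_out 0) (count_out 1)
     (ket 1) (ket 2) (ket 5) (ket 6) (ket 3) (ket 4) (ket 7) (ket 8) 0 1 (1/2) (1/2)
     {1,2,5,6} {3,4,7,8} {9,10} {11,12}"
proof (intro R4_transducer.intro R4_transducer_axioms.intro)
  show "counting_branch pfst_R4 (\<lambda>r. r) {1,2,5,6} (count_out 0) (ket 1) (ket 2) (ket 5) (ket 6) 2 3 0 1"
    by unfold_locales (auto simp: pfst_R4_unfold out_R4_def count_out_def split: sym.splits intro!: ext)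
  show "counting_branch pfst_R4 (\<lambda>r. r) {3,4,7,8} (count_out 1) (ket 3) (ket 4) (ket 7) (ket 8) 3 2 0 1"
    by unfold_locales (auto simp: pfst_R4_unfold out_R4_def count_out_def split: sym.splits intro!: ext)
  have step: "fst_step pfst_R4 LEnd (init_conf pfst_R4) = point_conf (state_step pfst_R4 LEnd (ket 0)) []"
    using fst_step_point_conf[of pfst_R4 "ket 0" LEnd "[]" "[]"]
    by (simp add: init_conf_eq_point_conf pfst_R4_simps out_R4_def count_out_def)
  show "restrict_nonhalting pfst_R4 (fst_step pfst_R4 LEnd (init_conf pfst_R4)) =
      (\<lambda>p x. 1/2 * point_conf (ket 1) [] p x + 1/2 * point_conf (ket 3) [] p x)"
    unfolding step restrict_nonhalting_point_conf
    by (intro ext) (auto simp: pfst_R4_unfold point_conf_def)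
  show "(\<Sum>p\<in>acc pfst_R4. fst_step pfst_R4 LEnd (init_conf pfst_R4) p x) = 0" for x
    unfolding step by (intro sum.neutral) (auto simp: pfst_R4_unfold point_conf_def)
  show "closed_branch pfst_R4 a {1,2,5,6} {9,10} \<and> closed_branch pfst_R4 a {3,4,7,8} {11,12}"
    if "a \<in> {Sym 0, Sym 1, Sym 2, Sym 3, REnd}" for a
    using that unfolding closed_branch_def by (auto simp: pfst_R4_unfold split: if_splits)
qed (auto simp: count_out_def ket_def)

lemma pfst_computes_R4_isolated:
  "\<exists>T. is_pfst {0,1,2,3} {4} T \<and> computes_isolated {0,1,2,3} {4} (pfst_prob T) R4"
proof -
  interpret R4_transducer pfst_R4 "\<lambda>r. r" "{1,2,5,6}" "{3,4,7,8}" "count_out 0" "count_out 1"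
    "ket 1" "ket 2" "ket 5" "ket 6" "ket 3" "ket 4" "ket 7" "ket 8" 0 1 "1/2" "1/2"
    "{1,2,5,6}" "{3,4,7,8}" "{9,10}" "{11,12}"
    by (rule pfst_R4_transducer)
  have "computes_isolated {0,1,2,3} {4} (pfst_prob pfst_R4) R4"
    using computes_isolated_R4 unfolding pfst_prob_def by simp
  then show ?thesis using is_pfst_pfst_R4 by blast
qed

definition block_perm :: "nat set \<Rightarrow> (nat \<Rightarrow> nat \<Rightarrow> complex) \<Rightarrow> nat list \<Rightarrow> nat \<Rightarrow> nat \<Rightarrow> complex" where
  "block_perm B U \<pi> q p = (if q \<in> B then (if p \<in> B then U q p else 0)
     else if q < length \<pi> \<and> p = \<pi> ! q then 1 else 0)"

lemma unitary_on_block_perm: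
  assumes dist: "distinct \<pi>" and range: "set \<pi> \<subseteq> {0..<length \<pi>}"
    and B: "B \<subseteq> {0..<length \<pi>}" and closed: "\<And>q. q \<in> {0..<length \<pi>} - B \<Longrightarrow> \<pi> ! q \<notin> B"
    and U: "unitary_on B U"
  shows "unitary_on {0..<length \<pi>} (block_perm B U \<pi>)"
  unfolding unitary_on_def
proof (intro ballI)
  let ?Q = "{0..<length \<pi>}" and ?V = "block_perm B U \<pi>"
  fix q q' assume q: "q \<in> ?Q" and q': "q' \<in> ?Q"
  show "(\<Sum>p\<in>?Q. ?V q p * cnj (?V q' p)) = (if q = q' then 1 else 0)"
  proof (cases "q \<in> B \<and> q' \<in> B")
    case True
    have "(\<Sum>p\<in>?Q. ?V q p * cnj (?V q' p)) = (\<Sum>p\<in>B. U q p * cnj (U q' p))"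
      using B True by (intro sum.mono_neutral_cong_right) (auto simp: block_perm_def)
    then show ?thesis using U True unfolding unitary_on_def by simp
  next
    case False
    consider "q \<in> B" "q' \<notin> B" | "q \<notin> B" "q' \<in> B" | "q \<notin> B" "q' \<notin> B" using False by blast
    then show ?thesis
    proof cases
      case 3
      have "\<pi> ! q \<in> ?Q" using q range by (auto simp: set_conv_nth)
      then have "(\<Sum>p\<in>?Q. ?V q p * cnj (?V q' p)) = (if \<pi> ! q = \<pi> ! q' then 1 else 0)"
        using 3 q q' by (simp add: block_perm_def if_distrib[of "\<lambda>x. x * _"] sum.delta cong: if_cong)
      also have "\<dots> = (if q = q' then 1 else 0)" using nth_eq_iff_index_eq[OF dist] q q' by auto
      finally show ?thesis .
    qed (use closed q q' in \<open>auto intro!: sum.neutral simp: block_perm_def\<close>)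
  qed
qed

text \<open>The unit vector \<open>init_amp = 3/5 (12|1\<rangle> + 5|2\<rangle>)/13 + 4/5 (12|3\<rangle> + 5|4\<rangle>)/13\<close> splits the
  initial amplitude between the branches, and \<open>init_unitary\<close> is the reflection of
  \<open>span {|0\<rangle>, \<dots>, |4\<rangle>}\<close> exchanging \<open>|0\<rangle>\<close> and \<open>init_amp\<close>.\<close>

definition init_amp :: "nat \<Rightarrow> complex" where
  "init_amp j = (if j = 1 then 36/65 else if j = 2 then 15/65 else if j = 3 then 48/65
     else if j = 4 then 20/65 else 0)"

definition init_unitary :: "nat \<Rightarrow> nat \<Rightarrow> complex" where
  "init_unitary q p = (if q = 0 then init_amp p else if p = 0 then init_amp q
     else (if q = p then 1 else 0) - init_amp q * init_amp p)"

text \<open>On reading \<open>0\<close>, each branch applies on the states \<open>(1, 2, 13)\<close> resp. \<open>(3, 4, 14)\<close> the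
  symmetric unitary \<open>zero_reflection\<close>, which fixes \<open>(12, 5, 0)/13\<close> and maps \<open>|2\<rangle>\<close> (the
  state reading \<open>1\<close>s) to \<open>5/13 (12, 5, 0)/13 + 12/13 |13\<rangle>\<close>.  Reading \<open>1\<close> moves the states
  \<open>1\<close> and \<open>3\<close> to rejecting states, so \<open>(12, 5)/13\<close> keeps the amplitude \<open>5/13\<close> on \<open>2\<close>
  resp. \<open>4\<close>.\<close>

definition zero_reflection :: "nat \<Rightarrow> nat \<Rightarrow> complex" where
  "zero_reflection i j = (if i = 0 then (if j = 0 then 144/169 else if j = 1 then 60/169 else -5/13)
     else if i = 1 then (if j = 0 then 60/169 else if j = 1 then 25/169 else 12/13)
     else (if j = 0 then -5/13 else if j = 1 then 12/13 else 0))"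

definition zero_index :: "nat \<Rightarrow> nat" where
  "zero_index q = (if q = 1 \<or> q = 3 then 0 else if q = 2 \<or> q = 4 then 1 else 2)"

definition zero_unitary :: "nat \<Rightarrow> nat \<Rightarrow> complex" where
  "zero_unitary q p = (if (q \<in> {1,2,13} \<and> p \<in> {1,2,13}) \<or> (q \<in> {3,4,14} \<and> p \<in> {3,4,14})
     then zero_reflection (zero_index q) (zero_index p) else 0)"

definition qfst_R4_block :: "nat sym \<Rightarrow> nat set" where
  "qfst_R4_block a = (if a = LEnd then {0,1,2,3,4} else if a = Sym 0 then {1,2,3,4,13,14} else {})"

definition qfst_R4_perm :: "nat sym \<Rightarrow> nat list" where
  "qfst_R4_perm a = (if a = Sym 0 then [0,1,2,3,4,15,16,17,18,9,10,11,12,13,14,5,6,7,8,19,20,21]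
     else if a = Sym 1 then [0,13,2,14,4,15,16,17,18,9,10,11,12,1,3,5,6,7,8,19,20,21]
     else if a = Sym 2 then [0,5,6,13,14,15,16,17,18,9,10,11,12,3,4,1,2,7,8,19,20,21]
     else if a = Sym 3 then [0,13,14,7,8,15,16,17,18,9,10,11,12,1,2,5,6,3,4,19,20,21]
     else if a = REnd then [19,13,14,15,16,9,10,11,12,5,6,7,8,1,2,3,4,17,18,0,20,21]
     else [0..<22])"

definition qfst_R4_trans :: "nat sym \<Rightarrow> nat \<Rightarrow> nat \<Rightarrow> complex" where
  "qfst_R4_trans a = block_perm (qfst_R4_block a)
     (if a = LEnd then init_unitary else zero_unitary) (qfst_R4_perm a)"

definition qfst_R4 :: "complex fst" where
  "qfst_R4 = \<lparr>states = {0..<22}, init = 0, acc = {9..12}, rej = {13..<22},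
     trans = qfst_R4_trans, out = out_R4\<rparr>"

lemma qfst_R4_simps:
  "states qfst_R4 = {0..<22}" "init qfst_R4 = 0" "acc qfst_R4 = {9,10,11,12}"
  "rej qfst_R4 = {13..<22}" "trans qfst_R4 = qfst_R4_trans" "out qfst_R4 = out_R4"
  "nonhalting qfst_R4 = {0,1,2,3,4,5,6,7,8}"
  unfolding qfst_R4_def nonhalting_def by auto

lemma states_qfst_R4_eq: "{0..<22::nat} = {0,1,2,3,4,5,6,7,8,9,10,11,12,13,14,15,16,17,18,19,20,21}"
  by (simp add: atLeast0LessThan lessThan_nat_numeral lessThan_Suc insert_commute)

lemma qfst_R4_perm_props: "length (qfst_R4_perm a) = 22" "distinct (qfst_R4_perm a)"
  "set (qfst_R4_perm a) \<subseteq> {0..<22}"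
  unfolding qfst_R4_perm_def by auto

lemma unitary_on_qfst_R4_trans:
  assumes a: "a \<in> tape_syms {0,1,2,3}"
  shows "unitary_on {0..<22} (qfst_R4_trans a)"
proof -
  have "unitary_on {0,1,2,3,4} init_unitary" "unitary_on {1,2,3,4,13,14} zero_unitary"
    unfolding unitary_on_def init_unitary_def init_amp_def zero_unitary_def zero_reflection_def
      zero_index_def
    by simp_all
  then have "unitary_on (qfst_R4_block a) (if a = LEnd then init_unitary else zero_unitary)"
    using a unfolding tape_syms_R4 unitary_on_def qfst_R4_block_def by auto
  moreover have "qfst_R4_perm a ! q \<notin> qfst_R4_block a" if "q \<in> {0..<22} - qfst_R4_block a" for q
    using a that unfolding tape_syms_R4 states_qfst_R4_eq
    by (auto simp: qfst_R4_block_def qfst_R4_perm_def)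
  ultimately show ?thesis
    using unitary_on_block_perm[of "qfst_R4_perm a" "qfst_R4_block a"] qfst_R4_perm_props[of a]
    unfolding qfst_R4_trans_def by (auto simp: qfst_R4_block_def)
qed

lemma is_qfst_qfst_R4: "is_qfst {0,1,2,3} {4} qfst_R4"
proof -
  have "qfst_R4_trans a q p = 0" if "q \<in> {0..<22}" "p \<notin> {0..<22}" for a q p
    using that qfst_R4_perm_props(3)[of a]
    by (auto simp: qfst_R4_trans_def block_perm_def qfst_R4_block_def set_conv_nth)
  then have "fst_basic {0,1,2,3} {4} qfst_R4"
    unfolding fst_basic_def qfst_R4_simps by (auto simp: out_R4_def count_out_def)
  moreover have "qfst_R4_trans REnd q p = 0"
    if "q \<in> {0,1,2,3,4,5,6,7,8}" "p \<in> {0,1,2,3,4,5,6,7,8}" for q p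
    using that by (auto simp: qfst_R4_trans_def block_perm_def qfst_R4_block_def qfst_R4_perm_def)
  ultimately show ?thesis
    using unitary_on_qfst_R4_trans unfolding is_qfst_def unitary_on_def qfst_R4_simps
    by auto
qed

definition split_ket :: "nat \<Rightarrow> nat \<Rightarrow> nat \<Rightarrow> complex" where
  "split_ket i j p = (if p = i then 12/13 else if p = j then 5/13 else 0)"

lemma state_step_qfst_R4_ket: "i < 22 \<Longrightarrow> state_step qfst_R4 a (ket i) = qfst_R4_trans a i"
  by (intro ext) (simp add: state_step_ket qfst_R4_simps)

lemma state_step_qfst_R4_split_ket:
  assumes "i < 22" "j < 22" "i \<noteq> j"
  shows "state_step qfst_R4 a (split_ket i j) =
    (\<lambda>p. 12/13 * qfst_R4_trans a i p + 5/13 * qfst_R4_trans a j p)"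
proof (intro ext)
  fix p
  have "state_step qfst_R4 a (split_ket i j) p = (\<Sum>q\<in>{i, j}. split_ket i j q * qfst_R4_trans a q p)"
    unfolding state_step_def qfst_R4_simps
    by (rule sum.mono_neutral_right) (use assms in \<open>auto simp: split_ket_def\<close>)
  then show "state_step qfst_R4 a (split_ket i j) p = 12/13 * qfst_R4_trans a i p + 5/13 * qfst_R4_trans a j p"
    using assms by (simp add: split_ket_def)
qed

lemmas qfst_R4_unfold = qfst_R4_simps state_step_qfst_R4_ket state_step_qfst_R4_split_ket
  qfst_R4_trans_def block_perm_def qfst_R4_block_def zero_unitary_def zero_reflection_def
  zero_index_def qfst_R4_perm_def ket_def split_ket_def nonhalting_part_def acc_weight_def

lemma qfst_R4_transducer:
  "R4_transducer qfst_R4 (\<lambda>c. (cmod c)\<^sup>2) {1,2,5,6} {3,4,7,8} (count_out 0) (count_out 1)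
     (split_ket 1 2) (ket 2) (split_ket 5 6) (ket 6) (split_ket 3 4) (ket 4) (split_ket 7 8) (ket 8)
     (5/13) (5/13) (3/5) (4/5) {1,2,5,6} {3,4,7,8} {9,10} {11,12}"
proof (intro R4_transducer.intro R4_transducer_axioms.intro)
  show "counting_branch qfst_R4 (\<lambda>c. (cmod c)\<^sup>2) {1,2,5,6} (count_out 0)
      (split_ket 1 2) (ket 2) (split_ket 5 6) (ket 6) 2 3 (5/13) (5/13)"
    by unfold_locales
      (auto simp: qfst_R4_unfold out_R4_def count_out_def norm_mult power_mult_distrib
        norm_divide power_divide intro!: ext)
  show "counting_branch qfst_R4 (\<lambda>c. (cmod c)\<^sup>2) {3,4,7,8} (count_out 1)
      (split_ket 3 4) (ket 4) (split_ket 7 8) (ket 8) 3 2 (5/13) (5/13)"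
    by unfold_locales
      (auto simp: qfst_R4_unfold out_R4_def count_out_def norm_mult power_mult_distrib
        norm_divide power_divide intro!: ext)
  have step: "fst_step qfst_R4 LEnd (init_conf qfst_R4) = point_conf (qfst_R4_trans LEnd 0) []"
    using fst_step_point_conf[of qfst_R4 "ket 0" LEnd "[]" "[]"]
    by (simp add: init_conf_eq_point_conf qfst_R4_simps out_R4_def count_out_def
        state_step_qfst_R4_ket)
  show "restrict_nonhalting qfst_R4 (fst_step qfst_R4 LEnd (init_conf qfst_R4)) =
      (\<lambda>p x. 3/5 * point_conf (split_ket 1 2) [] p x + 4/5 * point_conf (split_ket 3 4) [] p x)"
    unfolding step restrict_nonhalting_point_conf
    by (intro ext) (auto simp: qfst_R4_unfold point_conf_def init_unitary_def init_amp_def)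
  show "(\<Sum>p\<in>acc qfst_R4. (cmod (fst_step qfst_R4 LEnd (init_conf qfst_R4) p x))\<^sup>2) = 0" for x
    unfolding step by (intro sum.neutral) (auto simp: qfst_R4_unfold point_conf_def)
  show "closed_branch qfst_R4 a {1,2,5,6} {9,10} \<and> closed_branch qfst_R4 a {3,4,7,8} {11,12}"
    if "a \<in> {Sym 0, Sym 1, Sym 2, Sym 3, REnd}" for a
    using that unfolding closed_branch_def by (auto simp: qfst_R4_unfold split: if_splits)
qed (auto simp: count_out_def split_ket_def)

lemma qfst_computes_R4_isolated:
  "\<exists>T. is_qfst {0,1,2,3} {4} T \<and> computes_isolated {0,1,2,3} {4} (qfst_prob T) R4"
proof -
  interpret R4_transducer qfst_R4 "\<lambda>c. (cmod c)\<^sup>2" "{1,2,5,6}" "{3,4,7,8}" "count_out 0" "count_out 1"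
    "split_ket 1 2" "ket 2" "split_ket 5 6" "ket 6" "split_ket 3 4" "ket 4" "split_ket 7 8" "ket 8"
    "5/13" "5/13" "3/5" "4/5" "{1,2,5,6}" "{3,4,7,8}" "{9,10}" "{11,12}"
    by (rule qfst_R4_transducer)
  have "computes_isolated {0,1,2,3} {4} (qfst_prob qfst_R4) R4"
    using computes_isolated_R4 unfolding qfst_prob_def by (simp add: norm_divide power_divide)
  then show ?thesis using is_qfst_qfst_R4 by blast
qed

theorem theorem9:
  shows "(\<exists>T. is_pfst {0,1,2,3} {4} T \<and> computes_isolated {0,1,2,3} {4} (pfst_prob T) R4) \<and>
         (\<exists>T. is_qfst {0,1,2,3} {4} T \<and> computes_isolated {0,1,2,3} {4} (qfst_prob T) R4) \<and>
         (\<forall>T \<alpha>. is_pfst {0,1,2,3} {4} T \<longrightarrow> \<alpha> > 1/2 \<longrightarrow>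
              \<not> computes_with_prob {0,1,2,3} {4} (pfst_prob T) \<alpha> R4) \<and>
         (\<forall>T \<alpha>. is_qfst {0,1,2,3} {4} T \<longrightarrow> \<alpha> > 1/2 \<longrightarrow>
              \<not> computes_with_prob {0,1,2,3} {4} (qfst_prob T) \<alpha> R4)"
  using pfst_computes_R4_isolated qfst_computes_R4_isolated
    pfst_not_computes_R4_with_prob qfst_not_computes_R4_with_prob
  by blast

end
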